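(* Let $C\subset\mathbb{R}^n$ be a pointed, $n$-dimensional closed convex cone, $\Omega=S^{n-1}\cap\operatorname{int}C^{\circ}$, and $\omega\subset\Omega$ a nonempty compact set. Then there exist $K,L\in\mathcal{K}(C,\omega)$ such that $C_{\gamma^{n}}(K,\cdot)=C_{\gamma^{n}}(L,\cdot)$ but $K\neq L$.
   Context: $C^{\circ}=\{x:\langle x,y\rangle\le 0\ \forall y\in C\}$. A pseudo-cone is a nonempty closed convex set $K$ with $o\notin K$ and $\lambda K\subseteq K$ for $\lambda\ge1$; it is a $C$-pseudo-cone if its recession cone $\{z:K+z\subseteq K\}$ equals $C$. Support function $h_K(x)=\sup_{y\in K}\langle x,y\rangle$ on $C^{\circ}$, $\bar h_K=-h_K$. For $u\in\Omega$, $H_K^-(u)=\{x:\langle x,u\rangle\le h_K(u)\}$. $\mathcal{K}(C,\omega)$ is the set of $C$-pseudo-cones $K$ with $K=C\cap\bigcap_{u\in\omega}H^-_K(u)$. For Borel $\eta\subset\Omega$, $S_{\gamma^n}(K,\eta)=(2\pi)^{-n/2}\int_{\nu_K^{-1}(\eta)}e^{-|x|^2/2}d\mathcal{H}^{n-1}(x)$, where $\nu_K^{-1}(\eta)$ is the set of boundary points of $K$ with an outer unit normal in $\eta$, and $C_{\gamma^n}(K,\eta)=\int_\eta\bar h_K(u)\,dS_{\gamma^n}(K,u)$. *)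

theory Defs
  imports "HOL-Analysis.Analysis"
begin

definition polar_cone :: "'a::euclidean_space set \<Rightarrow> 'a set" where
  "polar_cone C = {x. \<forall>y\<in>C. x \<bullet> y \<le> 0}"

definition pointed_cone :: "'a::euclidean_space set \<Rightarrow> bool" where
  "pointed_cone C \<longleftrightarrow> C \<inter> uminus ` C = {0}"

definition Omega :: "'a::euclidean_space set \<Rightarrow> 'a set" where
  "Omega C = sphere 0 1 \<inter> interior (polar_cone C)"

definition pseudo_cone :: "'a::euclidean_space set \<Rightarrow> bool" where
  "pseudo_cone K \<longleftrightarrow> K \<noteq> {} \<and> closed K \<and> convex K \<and> 0 \<notin> K \<and>
     (\<forall>t::real. t \<ge> 1 \<longrightarrow> (\<forall>x\<in>K. t *\<^sub>R x \<in> K))"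

definition recession_cone :: "'a::euclidean_space set \<Rightarrow> 'a set" where
  "recession_cone K = {z. \<forall>x\<in>K. x + z \<in> K}"

definition C_pseudo_cone :: "'a::euclidean_space set \<Rightarrow> 'a set \<Rightarrow> bool" where
  "C_pseudo_cone C K \<longleftrightarrow> pseudo_cone K \<and> recession_cone K = C"

definition support_fun :: "'a::euclidean_space set \<Rightarrow> 'a \<Rightarrow> real" where
  "support_fun K x = (SUP y\<in>K. x \<bullet> y)"

definition neg_support_fun :: "'a::euclidean_space set \<Rightarrow> 'a \<Rightarrow> real" where
  "neg_support_fun K x = - support_fun K x"

definition halfspace_minus :: "'a::euclidean_space set \<Rightarrow> 'a \<Rightarrow> 'a set" where
  "halfspace_minus K u = {x. x \<bullet> u \<le> support_fun K u}"

definition K_C_omega :: "'a::euclidean_space set \<Rightarrow> 'a set \<Rightarrow> 'a set set" where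
  "K_C_omega C \<omega> = {K. C_pseudo_cone C K \<and> K = C \<inter> (\<Inter>u\<in>\<omega>. halfspace_minus K u)}"

text \<open>Contribution of one covering set to the s-dimensional Hausdorff sum
  (empty sets contribute 0; \<open>t ^ 0 = 1\<close>, so H^0 is counting measure).\<close>
definition hcontent :: "nat \<Rightarrow> 'a::euclidean_space set \<Rightarrow> ennreal" where
  "hcontent s E = (if E = {} then 0 else ennreal (unit_ball_vol (real s) * (diameter E / 2) ^ s))"

definition hausdorff_approx :: "nat \<Rightarrow> real \<Rightarrow> 'a::euclidean_space set \<Rightarrow> ennreal" where
  "hausdorff_approx s \<delta> A =
     (INF E\<in>{E::nat \<Rightarrow> 'a set. A \<subseteq> (\<Union>i. E i) \<and> (\<forall>i. bounded (E i) \<and> diameter (E i) \<le> \<delta>)}.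
        (\<Sum>i. hcontent s (E i)))"

definition hausdorff_outer :: "nat \<Rightarrow> 'a::euclidean_space set \<Rightarrow> ennreal" where
  "hausdorff_outer s A = (SUP \<delta>\<in>{0<..}. hausdorff_approx s \<delta> A)"

definition hausdorff_measure :: "nat \<Rightarrow> 'a::euclidean_space measure" where
  "hausdorff_measure s = measure_of UNIV (lambda_system UNIV (Pow UNIV) (hausdorff_outer s))
                                       (hausdorff_outer s)"

definition outer_unit_normal :: "'a::euclidean_space set \<Rightarrow> 'a \<Rightarrow> 'a \<Rightarrow> bool" where
  "outer_unit_normal K x u \<longleftrightarrow> norm u = 1 \<and> (\<forall>y\<in>K. (y - x) \<bullet> u \<le> 0)"

definition rev_sph_image :: "'a::euclidean_space set \<Rightarrow> 'a set \<Rightarrow> 'a set" where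
  "rev_sph_image K \<eta> = {x \<in> frontier K. \<exists>u\<in>\<eta>. outer_unit_normal K x u}"

definition gauss_surface_area :: "'a::euclidean_space set \<Rightarrow> 'a set \<Rightarrow> ennreal" where
  "gauss_surface_area K \<eta> =
     (\<integral>\<^sup>+ x \<in> rev_sph_image K \<eta>.
        ennreal ((2 * pi) powr (- real DIM('a) / 2) * exp (- (norm x)\<^sup>2 / 2))
      \<partial>hausdorff_measure (DIM('a) - 1))"

definition gauss_surface_measure :: "'a::euclidean_space set \<Rightarrow> 'a set \<Rightarrow> 'a measure" where
  "gauss_surface_measure C K =
     measure_of (Omega C) {\<eta>. \<eta> \<in> sets borel \<and> \<eta> \<subseteq> Omega C} (gauss_surface_area K)"

text \<open>\<open>C_{\<gamma>^n}(K,\<eta>) = \<integral>_\<eta> \<bar>h_K dS_{\<gamma>^n}(K,\<cdot>)\<close> (the integrand is nonnegative on \<open>\<Omega>\<close>).\<close>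
definition gauss_cone_measure :: "'a::euclidean_space set \<Rightarrow> 'a set \<Rightarrow> 'a set \<Rightarrow> ennreal" where
  "gauss_cone_measure C K \<eta> =
     (\<integral>\<^sup>+ u \<in> \<eta>. ennreal (neg_support_fun K u) \<partial>gauss_surface_measure C K)"

end

theory Submission
  imports Defs
begin

(*
  Fix u0 in omega. For t > 0 the truncation K_t = C \<inter> {x. x \<bullet> u0 \<le> -t} belongs to
  K(C, omega), and h(K_t, u0) = -t, so different t give different sets. A boundary point of K_t
  with an outer unit normal in Omega lies on the face F_t = C \<inter> {x. x \<bullet> u0 = -t}, and its
  normal is u0 unless the point lies in the relative boundary F_t - int C. This relative
  boundary is H^(n-1)-null: its homothetic copies towards an interior point of F_1 with ratios
  in [1/2, 1) are pairwise disjoint subsets of F_1, which has finite measure. Hence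
  C_gamma(K_t, -) is the point mass at u0 of weight (2 pi)^(-n/2) t^n G(t), where G(t) is the
  integral of exp (-t^2 |y|^2 / 2) over F_1. The function t^n G(t) is continuous, positive at
  t = 1 unless it vanishes identically, and tends to 0 as t tends to 0 and to infinity, so it
  takes the same value at two points a < b; then K_a and K_b are the required sets.

  The Hausdorff measure H^(n-1) enters only through three properties: closed sets are
  measurable, the map x \<mapsto> v + c x multiplies it by c^(n-1), and bounded pieces of
  hyperplanes have finite measure.
*)

section \<open>Hausdorff outer measure\<close>

definition hausdorff_covers :: "real \<Rightarrow> 'a::euclidean_space set \<Rightarrow> (nat \<Rightarrow> 'a set) set" where
  "hausdorff_covers \<delta> A = {E. A \<subseteq> (\<Union>i. E i) \<and> (\<forall>i. bounded (E i) \<and> diameter (E i) \<le> \<delta>)}"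

lemma hcontent_empty [simp]: "hcontent s {} = 0"
  by (simp add: hcontent_def)

lemma hausdorff_approx_eq_INF_covers:
  "hausdorff_approx s \<delta> A = (INF E\<in>hausdorff_covers \<delta> A. \<Sum>i. hcontent s (E i))"
  unfolding hausdorff_approx_def hausdorff_covers_def by simp

lemma hausdorff_approx_le_cover:
  assumes "A \<subseteq> (\<Union>i. E i)" "\<And>i. bounded (E i)" "\<And>i. diameter (E i) \<le> \<delta>"
  shows "hausdorff_approx s \<delta> A \<le> (\<Sum>i. hcontent s (E i))"
  unfolding hausdorff_approx_eq_INF_covers
  by (rule INF_lower) (use assms in \<open>auto simp: hausdorff_covers_def\<close>)

lemma hausdorff_approx_le_finite_cover:
  fixes A :: "'a::euclidean_space set" and Q :: "'i \<Rightarrow> 'a set"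
  assumes "finite I" "A \<subseteq> (\<Union>k\<in>I. Q k)" "0 \<le> \<delta>"
    and "\<And>k. k \<in> I \<Longrightarrow> bounded (Q k)" "\<And>k. k \<in> I \<Longrightarrow> diameter (Q k) \<le> \<delta>"
  shows "hausdorff_approx s \<delta> A \<le> (\<Sum>k\<in>I. hcontent s (Q k))"
proof -
  obtain g where g: "bij_betw g {..<card I} I"
    using ex_bij_betw_nat_finite[OF \<open>finite I\<close>] atLeast0LessThan by auto
  define E where "E i = (if i < card I then Q (g i) else {})" for i
  have gI: "i < card I \<Longrightarrow> g i \<in> I" for i
    using g by (auto simp: bij_betw_def)
  have "A \<subseteq> (\<Union>i. E i)"
    using assms(2) g by (force simp: E_def bij_betw_def)
  then have "hausdorff_approx s \<delta> A \<le> (\<Sum>i. hcontent s (E i))"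
    by (rule hausdorff_approx_le_cover) (use assms(3-5) gI in \<open>auto simp: E_def\<close>)
  also have "\<dots> = (\<Sum>i<card I. hcontent s (Q (g i)))"
    by (subst suminf_finite[of "{..<card I}"]) (auto simp: E_def)
  also have "\<dots> = (\<Sum>k\<in>I. hcontent s (Q k))"
    by (rule sum.reindex_bij_betw[OF g])
  finally show ?thesis .
qed

lemma hausdorff_approx_obtain_cover:
  assumes "hausdorff_approx s \<delta> A < c"
  obtains E where "E \<in> hausdorff_covers \<delta> A" "(\<Sum>i. hcontent s (E i)) < c"
  using assms unfolding hausdorff_approx_eq_INF_covers INF_less_iff by blast

lemma hausdorff_approx_mono: "A \<subseteq> B \<Longrightarrow> hausdorff_approx s \<delta> A \<le> hausdorff_approx s \<delta> B"
  unfolding hausdorff_approx_eq_INF_covers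
  by (rule INF_superset_mono) (auto simp: hausdorff_covers_def)

lemma hausdorff_approx_antimono:
  "\<delta> \<le> \<delta>' \<Longrightarrow> hausdorff_approx s \<delta>' A \<le> hausdorff_approx s \<delta> A"
  unfolding hausdorff_approx_eq_INF_covers
  by (rule INF_superset_mono) (auto simp: hausdorff_covers_def intro: order_trans)

lemma hausdorff_approx_le_outer: "0 < \<delta> \<Longrightarrow> hausdorff_approx s \<delta> A \<le> hausdorff_outer s A"
  unfolding hausdorff_outer_def by (rule SUP_upper) auto

lemma hausdorff_outer_leI:
  "(\<And>\<delta>. 0 < \<delta> \<Longrightarrow> hausdorff_approx s \<delta> A \<le> c) \<Longrightarrow> hausdorff_outer s A \<le> c"
  unfolding hausdorff_outer_def by (rule SUP_least) auto

lemma hausdorff_outer_mono: "A \<subseteq> B \<Longrightarrow> hausdorff_outer s A \<le> hausdorff_outer s B"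
  by (rule hausdorff_outer_leI) (meson hausdorff_approx_le_outer hausdorff_approx_mono order_trans)

lemma hausdorff_outer_empty [simp]: "hausdorff_outer s {} = 0"
proof -
  have "hausdorff_approx s \<delta> {} \<le> 0" if "0 < \<delta>" for \<delta>
    using hausdorff_approx_le_cover[of "{}" "\<lambda>_. {}" \<delta> s] that by simp
  then show ?thesis
    by (metis hausdorff_outer_leI le_zero_eq)
qed

lemma suminf_ennreal_geometric_half:
  assumes "0 \<le> e"
  shows "(\<Sum>i. ennreal (e / 2 ^ Suc i)) = ennreal e"
proof -
  have "(\<lambda>i. e * (1/2) ^ Suc i) sums (e * 1)"
    by (intro sums_mult power_half_series)
  then have sums: "(\<lambda>i. e / 2 ^ Suc i) sums e"
    by (simp add: power_divide)
  have "(\<Sum>i. ennreal (e / 2 ^ Suc i)) = ennreal (\<Sum>i. e / 2 ^ Suc i)"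
    by (rule suminf_ennreal2) (use assms sums_summable[OF sums] in auto)
  also have "\<dots> = ennreal e"
    using sums_unique[OF sums, symmetric] by simp
  finally show ?thesis .
qed

lemma ennreal_less_add_pos:
  fixes a :: ennreal
  assumes "a \<noteq> top" "0 < e"
  shows "a < a + ennreal e"
  using ennreal_add_left_cancel_less[of a 0 "ennreal e"] assms by simp

lemma hausdorff_approx_countable_subadditive:
  fixes A :: "nat \<Rightarrow> 'a::euclidean_space set"
  shows "hausdorff_approx s \<delta> (\<Union>i. A i) \<le> (\<Sum>i. hausdorff_approx s \<delta> (A i))"
proof (rule ennreal_le_epsilon)
  fix e :: real
  assume fin: "(\<Sum>i. hausdorff_approx s \<delta> (A i)) < top" and "0 < e"
  have lt: "hausdorff_approx s \<delta> (A i) < hausdorff_approx s \<delta> (A i) + ennreal (e / 2 ^ Suc i)" for i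
    using ennreal_suminf_lessD[OF fin, of i] \<open>0 < e\<close> by (intro ennreal_less_add_pos) auto
  have "\<exists>E. E \<in> hausdorff_covers \<delta> (A i) \<and>
      (\<Sum>j. hcontent s (E j)) < hausdorff_approx s \<delta> (A i) + ennreal (e / 2 ^ Suc i)" for i
    by (rule hausdorff_approx_obtain_cover[OF lt]) blast
  then obtain E where E: "\<And>i. E i \<in> hausdorff_covers \<delta> (A i)"
    "\<And>i. (\<Sum>j. hcontent s (E i j)) < hausdorff_approx s \<delta> (A i) + ennreal (e / 2 ^ Suc i)"
    using choice[of "\<lambda>i E. E \<in> hausdorff_covers \<delta> (A i) \<and>
      (\<Sum>j. hcontent s (E j)) < hausdorff_approx s \<delta> (A i) + ennreal (e / 2 ^ Suc i)"] by blast
  define F where "F k = (case prod_decode k of (i, j) \<Rightarrow> E i j)" for k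
  have "(\<Union>i. A i) \<subseteq> (\<Union>k. F k)"
  proof
    fix x assume "x \<in> (\<Union>i. A i)"
    then obtain i j where "x \<in> E i j"
      using E(1) unfolding hausdorff_covers_def by blast
    then have "x \<in> F (prod_encode (i, j))"
      by (simp add: F_def)
    then show "x \<in> (\<Union>k. F k)" by blast
  qed
  then have "hausdorff_approx s \<delta> (\<Union>i. A i) \<le> (\<Sum>k. hcontent s (F k))"
    by (rule hausdorff_approx_le_cover)
      (use E(1) in \<open>auto simp: F_def hausdorff_covers_def split: prod.splits\<close>)
  also have "\<dots> = (\<Sum>i. \<Sum>j. hcontent s (E i j))"
    using suminf_ennreal_2dimen[of "\<lambda>i. \<Sum>j. hcontent s (E i j)" "\<lambda>(i,j). hcontent s (E i j)"]
    by (simp add: F_def case_prod_beta)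
  also have "\<dots> \<le> (\<Sum>i. hausdorff_approx s \<delta> (A i) + ennreal (e / 2 ^ Suc i))"
    by (intro suminf_le) (use E(2) in \<open>auto intro: less_imp_le\<close>)
  also have "\<dots> = (\<Sum>i. hausdorff_approx s \<delta> (A i)) + (\<Sum>i. ennreal (e / 2 ^ Suc i))"
    by (rule suminf_add[symmetric]) auto
  also have "\<dots> = (\<Sum>i. hausdorff_approx s \<delta> (A i)) + ennreal e"
    unfolding suminf_ennreal_geometric_half[OF less_imp_le[OF \<open>0 < e\<close>]] ..
  finally show "hausdorff_approx s \<delta> (\<Union>i. A i) \<le> (\<Sum>i. hausdorff_approx s \<delta> (A i)) + ennreal e" .
qed

lemma hausdorff_outer_countable_subadditive:
  fixes A :: "nat \<Rightarrow> 'a::euclidean_space set"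
  shows "hausdorff_outer s (\<Union>i. A i) \<le> (\<Sum>i. hausdorff_outer s (A i))"
proof (rule hausdorff_outer_leI)
  fix \<delta> :: real assume "0 < \<delta>"
  have "hausdorff_approx s \<delta> (\<Union>i. A i) \<le> (\<Sum>i. hausdorff_approx s \<delta> (A i))"
    by (rule hausdorff_approx_countable_subadditive)
  also have "\<dots> \<le> (\<Sum>i. hausdorff_outer s (A i))"
    by (intro suminf_le hausdorff_approx_le_outer \<open>0 < \<delta>\<close>) auto
  finally show "hausdorff_approx s \<delta> (\<Union>i. A i) \<le> (\<Sum>i. hausdorff_outer s (A i))" .
qed

lemma hausdorff_outer_subadditive:
  fixes A B :: "'a::euclidean_space set"
  shows "hausdorff_outer s (A \<union> B) \<le> hausdorff_outer s A + hausdorff_outer s B"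
  using hausdorff_outer_countable_subadditive[of s "binaryset A B"]
  by (simp add: UN_binaryset_eq suminf_binaryset_eq)

lemma outer_measure_space_hausdorff_outer:
  "outer_measure_space (Pow UNIV) (hausdorff_outer s :: 'a::euclidean_space set \<Rightarrow> ennreal)"
  unfolding outer_measure_space_def positive_def increasing_def countably_subadditive_def
  by (auto intro: hausdorff_outer_mono hausdorff_outer_countable_subadditive)

lemma measure_space_hausdorff_outer:
  "measure_space UNIV (lambda_system UNIV (Pow UNIV) (hausdorff_outer s))
     (hausdorff_outer s :: 'a::euclidean_space set \<Rightarrow> ennreal)"
proof -
  interpret sigma_algebra "UNIV :: 'a set" "Pow UNIV"
    by (rule sigma_algebra_Pow)
  show ?thesis
    by (rule caratheodory_lemma[OF outer_measure_space_hausdorff_outer])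
qed

lemma sets_hausdorff_measure:
  "sets (hausdorff_measure s :: 'a::euclidean_space measure) =
     lambda_system UNIV (Pow UNIV) (hausdorff_outer s)"
  using measure_space_hausdorff_outer[of s, where 'a='a]
  unfolding hausdorff_measure_def measure_space_def
  by (subst sets_measure_of) (auto simp: lambda_system_def sigma_algebra.sigma_sets_eq)

lemma emeasure_hausdorff_measure:
  "A \<in> sets (hausdorff_measure s) \<Longrightarrow>
     emeasure (hausdorff_measure s) A = hausdorff_outer s (A :: 'a::euclidean_space set)"
  unfolding sets_hausdorff_measure hausdorff_measure_def
  using measure_space_hausdorff_outer[of s, where 'a='a]
    sigma_algebra.sigma_sets_eq[of "UNIV::'a set" "lambda_system UNIV (Pow UNIV) (hausdorff_outer s)"]
  by (intro emeasure_measure_of_sigma) (auto simp: measure_space_def)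

lemma space_hausdorff_measure [simp]: "space (hausdorff_measure s) = UNIV"
  by (simp add: hausdorff_measure_def lambda_system_def)

section \<open>Closed sets are Hausdorff measurable\<close>

lemma hausdorff_approx_additive_separated:
  fixes A B :: "'a::euclidean_space set"
  assumes "\<And>a b. a \<in> A \<Longrightarrow> b \<in> B \<Longrightarrow> r \<le> dist a b" "0 \<le> \<delta>" "\<delta> < r"
  shows "hausdorff_approx s \<delta> A + hausdorff_approx s \<delta> B \<le> hausdorff_approx s \<delta> (A \<union> B)"
  unfolding hausdorff_approx_eq_INF_covers[of s \<delta> "A \<union> B"]
proof (rule INF_greatest)
  fix E assume E: "E \<in> hausdorff_covers \<delta> (A \<union> B)"
  then have bounded: "bounded (E i)" and small: "diameter (E i) \<le> \<delta>" for i
    by (auto simp: hausdorff_covers_def)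
  define EA where "EA i = (if E i \<inter> A = {} then {} else E i)" for i
  define EB where "EB i = (if E i \<inter> B = {} then {} else E i)" for i
  have cover: "A \<subseteq> (\<Union>i. EA i)" "B \<subseteq> (\<Union>i. EB i)"
  proof -
    have "x \<in> EA i" if "x \<in> A" "x \<in> E i" for x i
      using that by (auto simp: EA_def)
    moreover have "x \<in> EB i" if "x \<in> B" "x \<in> E i" for x i
      using that by (auto simp: EB_def)
    ultimately show "A \<subseteq> (\<Union>i. EA i)" "B \<subseteq> (\<Union>i. EB i)"
      using E unfolding hausdorff_covers_def by blast+
  qed
  have "hausdorff_approx s \<delta> A \<le> (\<Sum>i. hcontent s (EA i))"
    by (rule hausdorff_approx_le_cover[OF cover(1)]) (auto simp: EA_def bounded small \<open>0 \<le> \<delta>\<close>)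
  moreover have "hausdorff_approx s \<delta> B \<le> (\<Sum>i. hcontent s (EB i))"
    by (rule hausdorff_approx_le_cover[OF cover(2)]) (auto simp: EB_def bounded small \<open>0 \<le> \<delta>\<close>)
  moreover have "hcontent s (EA i) + hcontent s (EB i) \<le> hcontent s (E i)" for i
  proof -
    have "E i \<inter> A = {} \<or> E i \<inter> B = {}"
    proof (rule ccontr)
      assume "\<not> ?thesis"
      then obtain a b where "a \<in> E i" "a \<in> A" "b \<in> E i" "b \<in> B" by auto
      then have "r \<le> dist a b" "dist a b \<le> diameter (E i)"
        using assms(1) diameter_bounded_bound[OF bounded] by auto
      then show False using small[of i] \<open>\<delta> < r\<close> by linarith
    qed
    then show ?thesis by (auto simp: EA_def EB_def)
  qed
  then have "(\<Sum>i. hcontent s (EA i)) + (\<Sum>i. hcontent s (EB i)) \<le> (\<Sum>i. hcontent s (E i))"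
    by (subst suminf_add) (auto intro: suminf_le)
  ultimately show "hausdorff_approx s \<delta> A + hausdorff_approx s \<delta> B \<le> (\<Sum>i. hcontent s (E i))"
    by (meson add_mono order_trans)
qed

lemma hausdorff_outer_additive_separated:
  fixes A B :: "'a::euclidean_space set"
  assumes "\<And>a b. a \<in> A \<Longrightarrow> b \<in> B \<Longrightarrow> r \<le> dist a b" "0 < r"
  shows "hausdorff_outer s (A \<union> B) = hausdorff_outer s A + hausdorff_outer s B"
proof (rule antisym)
  show "hausdorff_outer s (A \<union> B) \<le> hausdorff_outer s A + hausdorff_outer s B"
    by (rule hausdorff_outer_subadditive)
  have "hausdorff_approx s \<delta>\<^sub>1 A + hausdorff_approx s \<delta>\<^sub>2 B \<le> hausdorff_outer s (A \<union> B)"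
    if "0 < \<delta>\<^sub>1" "0 < \<delta>\<^sub>2" for \<delta>\<^sub>1 \<delta>\<^sub>2
  proof -
    define \<delta> where "\<delta> = min (min \<delta>\<^sub>1 \<delta>\<^sub>2) (r / 2)"
    have \<delta>: "0 < \<delta>" "\<delta> \<le> \<delta>\<^sub>1" "\<delta> \<le> \<delta>\<^sub>2" "\<delta> < r"
      using that \<open>0 < r\<close> by (auto simp: \<delta>_def)
    have "hausdorff_approx s \<delta>\<^sub>1 A + hausdorff_approx s \<delta>\<^sub>2 B \<le>
        hausdorff_approx s \<delta> A + hausdorff_approx s \<delta> B"
      by (intro add_mono hausdorff_approx_antimono \<delta>)
    also have "\<dots> \<le> hausdorff_approx s \<delta> (A \<union> B)"
      by (rule hausdorff_approx_additive_separated[OF assms(1)]) (use \<delta> in auto)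
    also have "\<dots> \<le> hausdorff_outer s (A \<union> B)"
      by (rule hausdorff_approx_le_outer[OF \<delta>(1)])
    finally show ?thesis .
  qed
  then have "(SUP \<delta>\<^sub>2\<in>{0<..}. SUP \<delta>\<^sub>1\<in>{0<..}. hausdorff_approx s \<delta>\<^sub>1 A + hausdorff_approx s \<delta>\<^sub>2 B)
      \<le> hausdorff_outer s (A \<union> B)"
    by (intro SUP_least) auto
  then show "hausdorff_outer s A + hausdorff_outer s B \<le> hausdorff_outer s (A \<union> B)"
    unfolding hausdorff_outer_def[of s A] hausdorff_outer_def[of s B]
    by (simp add: ennreal_SUP_add_left[symmetric] ennreal_SUP_add_right)
qed

lemma hausdorff_outer_sum_le_separated_Union:
  fixes A :: "nat \<Rightarrow> 'a::euclidean_space set"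
  assumes "\<And>m. \<exists>r>0. \<forall>i<m. \<forall>a\<in>A i. \<forall>b\<in>A m. r \<le> dist a b"
  shows "(\<Sum>i<m. hausdorff_outer s (A i)) \<le> hausdorff_outer s (\<Union>i<m. A i)"
proof (induction m)
  case (Suc m)
  obtain r where "0 < r" "\<And>a b. a \<in> (\<Union>i<m. A i) \<Longrightarrow> b \<in> A m \<Longrightarrow> r \<le> dist a b"
    using assms[of m] by blast
  then have "hausdorff_outer s ((\<Union>i<m. A i) \<union> A m) =
      hausdorff_outer s (\<Union>i<m. A i) + hausdorff_outer s (A m)"
    by (intro hausdorff_outer_additive_separated)
  then show ?case
    using Suc.IH by (simp add: lessThan_Suc Un_commute add_right_mono)
qed simp

lemma inverse_Suc_bracket:
  fixes d :: real
  assumes "0 < d" "d < 1 / real (Suc k)"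
  obtains j where "k \<le> j" "1 / real (Suc (Suc j)) \<le> d" "d < 1 / real (Suc j)"
proof -
  let ?P = "\<lambda>n. 1 / real (Suc n) \<le> d"
  obtain n where "?P n"
    using reals_Archimedean[OF \<open>0 < d\<close>] by (auto simp: inverse_eq_divide intro: less_imp_le)
  define m where "m = (LEAST n. ?P n)"
  have "?P m"
    unfolding m_def by (rule LeastI[of ?P, OF \<open>?P n\<close>])
  have "\<not> ?P n" if "n \<le> k" for n
  proof -
    have "1 / real (Suc k) \<le> 1 / real (Suc n)"
      using that by (simp add: frac_le)
    then show ?thesis using assms(2) by linarith
  qed
  then have "k < m"
    using \<open>?P m\<close> by (meson not_less)
  then obtain j where "m = Suc j" "k \<le> j"
    by (cases m) auto
  moreover have "\<not> ?P j"
  proof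
    assume "?P j"
    then have "m \<le> j"
      unfolding m_def by (rule Least_le)
    then show False
      using \<open>m = Suc j\<close> by simp
  qed
  ultimately show ?thesis
    using that \<open>?P m\<close> by auto
qed

lemma ennreal_suminf_tail_le:
  fixes f :: "nat \<Rightarrow> ennreal"
  assumes "(\<Sum>i. f i) \<noteq> top" "0 < e"
  obtains k where "(\<Sum>j. f (j + k)) \<le> ennreal e"
proof -
  have fin: "f i \<noteq> top" for i
    using ennreal_suminf_lessD[of f top] assms(1) by (simp add: top.not_eq_extremum)
  define g where "g i = enn2real (f i)" for i
  have f: "f i = ennreal (g i)" and g: "0 \<le> g i" for i
    using fin[of i] by (auto simp: g_def ennreal_enn2real_if)
  have "summable g"
    using assms(1) g by (intro summable_suminf_not_top) (auto simp: f)
  then obtain k where "norm (\<Sum>i. g (i + k)) < e"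
    using suminf_exist_split[OF \<open>0 < e\<close>] by blast
  moreover have "(\<Sum>j. f (j + k)) = ennreal (\<Sum>j. g (j + k))"
    unfolding f using g \<open>summable g\<close> by (intro suminf_ennreal2) auto
  ultimately have "(\<Sum>j. f (j + k)) \<le> ennreal e"
    by (auto intro: ennreal_leI)
  then show ?thesis ..
qed

(* Rings of equal parity are positively separated, so each parity class has total measure at
   most that of X. *)
lemma hausdorff_outer_rings_le:
  fixes d :: "'a::euclidean_space \<Rightarrow> real" and X :: "'a set"
  assumes d: "\<And>x y. d x \<le> d y + dist x y"
  defines "R j \<equiv> {x \<in> X. 1 / real (Suc (Suc j)) \<le> d x \<and> d x < 1 / real (Suc j)}"
  shows "(\<Sum>j. hausdorff_outer s (R j)) \<le> 2 * hausdorff_outer s X"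
proof -
  have separated: "\<exists>r>0. \<forall>i<m. \<forall>a\<in>R (2 * i + p). \<forall>b\<in>R (2 * m + p). r \<le> dist a b" for m p
  proof (cases m)
    case (Suc m')
    define r where "r = 1 / real (2 * m + p) - 1 / real (2 * m + p + 1)"
    have "r \<le> dist a b" if "i < m" "a \<in> R (2 * i + p)" "b \<in> R (2 * m + p)" for i a b
    proof -
      have "1 / real (2 * m + p) \<le> 1 / real (Suc (Suc (2 * i + p)))"
        using \<open>i < m\<close> by (intro frac_le) auto
      also have "\<dots> \<le> d a"
        using that(2) by (simp add: R_def)
      finally show ?thesis
        using that(3) d[of a b] by (simp add: R_def r_def)
    qed
    moreover have "0 < r"
      using Suc by (auto simp: r_def frac_less2)
    ultimately show ?thesis by blast
  qed (auto intro: exI[of _ 1])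
  have half: "(\<Sum>i<m. hausdorff_outer s (R (2 * i + p))) \<le> hausdorff_outer s X" for m p
  proof -
    have "(\<Sum>i<m. hausdorff_outer s (R (2 * i + p))) \<le> hausdorff_outer s (\<Union>i<m. R (2 * i + p))"
      by (rule hausdorff_outer_sum_le_separated_Union) (rule separated)
    also have "\<dots> \<le> hausdorff_outer s X"
      by (rule hausdorff_outer_mono) (auto simp: R_def)
    finally show ?thesis .
  qed
  have "(\<Sum>j<n. hausdorff_outer s (R j)) \<le> 2 * hausdorff_outer s X" for n
  proof -
    have split: "(\<Sum>j<2 * m. f j) = (\<Sum>i<m. f (2 * i + 0)) + (\<Sum>i<m. f (2 * i + 1))"
      for m and f :: "nat \<Rightarrow> ennreal"
      by (induction m) (auto simp: algebra_simps)
    have "(\<Sum>j<n. hausdorff_outer s (R j)) \<le> (\<Sum>j<2 * n. hausdorff_outer s (R j))"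
      by (rule sum_mono2) auto
    also have "\<dots> \<le> hausdorff_outer s X + hausdorff_outer s X"
      unfolding split by (intro add_mono half)
    finally show ?thesis
      by (simp add: mult_2)
  qed
  then show ?thesis
    unfolding suminf_eq_SUP by (rule SUP_least)
qed

lemma diff_closed_subset_rings:
  fixes F X :: "'a::metric_space set"
  assumes "closed F" "F \<noteq> {}"
  shows "X - F \<subseteq> {x \<in> X. 1 / real (Suc k) \<le> infdist x F} \<union>
    (\<Union>j. {x \<in> X. 1 / real (Suc (Suc (j + k))) \<le> infdist x F \<and> infdist x F < 1 / real (Suc (j + k))})"
proof
  fix x assume x: "x \<in> X - F"
  then have "0 < infdist x F"
    using assms by (auto intro: infdist_pos_not_in_closed)
  show "x \<in> {x \<in> X. 1 / real (Suc k) \<le> infdist x F} \<union>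
    (\<Union>j. {x \<in> X. 1 / real (Suc (Suc (j + k))) \<le> infdist x F \<and> infdist x F < 1 / real (Suc (j + k))})"
  proof (cases "1 / real (Suc k) \<le> infdist x F")
    case False
    then obtain j where "k \<le> j" "1 / real (Suc (Suc j)) \<le> infdist x F" "infdist x F < 1 / real (Suc j)"
      using inverse_Suc_bracket[OF \<open>0 < infdist x F\<close>, of k] by auto
    moreover have "j = (j - k) + k"
      using \<open>k \<le> j\<close> by simp
    ultimately show ?thesis
      using x by (intro UnI2 UN_I[of "j - k"]) auto
  qed (use x in auto)
qed

lemma hausdorff_outer_add_far_part_le:
  fixes F X :: "'a::euclidean_space set"
  shows "hausdorff_outer s (F \<inter> X) + hausdorff_outer s {x \<in> X. 1 / real (Suc k) \<le> infdist x F}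
    \<le> hausdorff_outer s X"
proof -
  have "1 / real (Suc k) \<le> dist a b" if "a \<in> F \<inter> X" "b \<in> {x \<in> X. 1 / real (Suc k) \<le> infdist x F}" for a b
    using that infdist_le[of a F b] by (auto simp: dist_commute)
  then have "hausdorff_outer s (F \<inter> X) + hausdorff_outer s {x \<in> X. 1 / real (Suc k) \<le> infdist x F} =
      hausdorff_outer s ((F \<inter> X) \<union> {x \<in> X. 1 / real (Suc k) \<le> infdist x F})"
    by (intro hausdorff_outer_additive_separated[symmetric]) auto
  also have "\<dots> \<le> hausdorff_outer s X"
    by (rule hausdorff_outer_mono) auto
  finally show ?thesis .
qed

(* Caratheodory's criterion for metric outer measures: the points of X at distance at least
   1/(k+1) from F are separated from F, and the rest of X - F is a tail of the rings. *)
lemma hausdorff_outer_closed_split: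
  fixes F X :: "'a::euclidean_space set"
  assumes "closed F"
  shows "hausdorff_outer s (F \<inter> X) + hausdorff_outer s (X - F) \<le> hausdorff_outer s X"
proof (cases "F = {} \<or> hausdorff_outer s X = top")
  case True
  then show ?thesis by auto
next
  case False
  define d where "d x = infdist x F" for x
  define X' where "X' k = {x \<in> X. 1 / real (Suc k) \<le> d x}" for k
  define R where "R j = {x \<in> X. 1 / real (Suc (Suc j)) \<le> d x \<and> d x < 1 / real (Suc j)}" for j
  have inner: "hausdorff_outer s (F \<inter> X) + hausdorff_outer s (X' k) \<le> hausdorff_outer s X" for k
    unfolding X'_def d_def by (rule hausdorff_outer_add_far_part_le)
  have outer: "hausdorff_outer s (X - F) \<le> hausdorff_outer s (X' k) + (\<Sum>j. hausdorff_outer s (R (j + k)))"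
    for k
  proof -
    have "X - F \<subseteq> X' k \<union> (\<Union>j. R (j + k))"
      unfolding X'_def R_def d_def using \<open>closed F\<close> False by (intro diff_closed_subset_rings) auto
    then have "hausdorff_outer s (X - F) \<le> hausdorff_outer s (X' k \<union> (\<Union>j. R (j + k)))"
      by (rule hausdorff_outer_mono)
    also have "\<dots> \<le> hausdorff_outer s (X' k) + hausdorff_outer s (\<Union>j. R (j + k))"
      by (rule hausdorff_outer_subadditive)
    also have "\<dots> \<le> hausdorff_outer s (X' k) + (\<Sum>j. hausdorff_outer s (R (j + k)))"
      by (intro add_left_mono hausdorff_outer_countable_subadditive)
    finally show ?thesis .
  qed
  have "(\<Sum>j. hausdorff_outer s (R j)) \<le> 2 * hausdorff_outer s X"
    unfolding R_def d_def by (rule hausdorff_outer_rings_le) (rule infdist_triangle)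
  then have rings_finite: "(\<Sum>j. hausdorff_outer s (R j)) \<noteq> top"
    using False by (auto simp: ennreal_mult_eq_top_iff top_unique)
  show ?thesis
  proof (rule ennreal_le_epsilon)
    fix e :: real assume "0 < e"
    then obtain k where k: "(\<Sum>j. hausdorff_outer s (R (j + k))) \<le> ennreal e"
      using ennreal_suminf_tail_le[OF rings_finite] by blast
    have "hausdorff_outer s (F \<inter> X) + hausdorff_outer s (X - F) \<le>
        (hausdorff_outer s (F \<inter> X) + hausdorff_outer s (X' k)) + ennreal e"
      using add_left_mono[OF order_trans[OF outer add_left_mono[OF k]]] by (simp add: add.assoc)
    also have "\<dots> \<le> hausdorff_outer s X + ennreal e"
      by (intro add_right_mono inner)
    finally show "hausdorff_outer s (F \<inter> X) + hausdorff_outer s (X - F) \<le> hausdorff_outer s X + ennreal e" .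
  qed
qed

lemma closed_in_sets_hausdorff_measure:
  fixes F :: "'a::euclidean_space set"
  assumes "closed F"
  shows "F \<in> sets (hausdorff_measure s)"
  unfolding sets_hausdorff_measure lambda_system_def
proof (safe)
  fix X :: "'a set"
  have "(F \<inter> X) \<union> ((UNIV - F) \<inter> X) = X" "(UNIV - F) \<inter> X = X - F"
    by blast+
  moreover note hausdorff_outer_subadditive[of s "F \<inter> X" "(UNIV - F) \<inter> X"]
  ultimately show "hausdorff_outer s (F \<inter> X) + hausdorff_outer s ((UNIV - F) \<inter> X) = hausdorff_outer s X"
    using hausdorff_outer_closed_split[OF assms, of s X] by (simp add: antisym)
qed auto

lemma sets_borel_subset_hausdorff_measure:
  "sets borel \<subseteq> sets (hausdorff_measure s :: 'a::euclidean_space measure)"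
proof -
  have "sets (borel :: 'a measure) = sigma_sets UNIV (Collect closed)"
    by (simp add: borel_eq_closed)
  also have "\<dots> \<subseteq> sets (hausdorff_measure s)"
    using sets.top[of "hausdorff_measure s :: 'a measure"]
    by (intro sets.sigma_sets_subset') (auto intro: closed_in_sets_hausdorff_measure)
  finally show ?thesis .
qed

lemma borel_measurable_hausdorff_measure:
  "f \<in> borel_measurable borel \<Longrightarrow> f \<in> borel_measurable (hausdorff_measure s :: 'a::euclidean_space measure)"
  by (rule borel_measurable_subalgebra[OF sets_borel_subset_hausdorff_measure]) auto

section \<open>Homotheties\<close>

lemma bounded_affine_image:
  fixes E :: "'a::real_normed_vector set"
  assumes "bounded E"
  shows "bounded ((\<lambda>x. v + c *\<^sub>R x) ` E)"
proof -
  have "bounded ((\<lambda>x. v + x) ` (\<lambda>x. c *\<^sub>R x) ` E)"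
    by (intro bounded_translation bounded_scaling assms)
  then show ?thesis by (simp add: image_image)
qed

lemma diameter_affine_image_le:
  fixes E :: "'a::euclidean_space set"
  assumes "0 < c" "bounded E"
  shows "diameter ((\<lambda>x. v + c *\<^sub>R x) ` E) \<le> c * diameter E"
proof (cases "E = {}")
  case False
  show ?thesis
  proof (rule diameter_le)
    fix x y assume "x \<in> (\<lambda>x. v + c *\<^sub>R x) ` E" "y \<in> (\<lambda>x. v + c *\<^sub>R x) ` E"
    then obtain a b where "a \<in> E" "b \<in> E" "x = v + c *\<^sub>R a" "y = v + c *\<^sub>R b"
      by auto
    moreover have "norm (c *\<^sub>R a - c *\<^sub>R b) = c * norm (a - b)"
      using \<open>0 < c\<close> by (simp flip: scaleR_diff_right)
    ultimately show "norm (x - y) \<le> c * diameter E"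
      using diameter_bounded_bound[OF \<open>bounded E\<close>, of a b] \<open>0 < c\<close> by (simp add: dist_norm)
  qed (use False in auto)
qed simp

lemma hcontent_affine_image_le:
  fixes E :: "'a::euclidean_space set"
  assumes "0 < c" "bounded E"
  shows "hcontent s ((\<lambda>x. v + c *\<^sub>R x) ` E) \<le> ennreal (c ^ s) * hcontent s E"
proof (cases "E = {}")
  case False
  have V: "0 \<le> unit_ball_vol (real s)"
    by (rule unit_ball_vol_nonneg) simp
  have "diameter ((\<lambda>x. v + c *\<^sub>R x) ` E) / 2 \<le> c * diameter E / 2"
    using diameter_affine_image_le[OF assms] by simp
  then have "(diameter ((\<lambda>x. v + c *\<^sub>R x) ` E) / 2) ^ s \<le> c ^ s * (diameter E / 2) ^ s"
    using diameter_ge_0[OF bounded_affine_image[OF \<open>bounded E\<close>]]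
    by (metis power_mono power_mult_distrib times_divide_eq_right zero_le_divide_iff zero_le_numeral)
  then have "unit_ball_vol (real s) * (diameter ((\<lambda>x. v + c *\<^sub>R x) ` E) / 2) ^ s
      \<le> c ^ s * (unit_ball_vol (real s) * (diameter E / 2) ^ s)"
    using V by (simp add: mult.left_commute mult_left_mono)
  then show ?thesis
    using False \<open>0 < c\<close> V diameter_ge_0[OF \<open>bounded E\<close>]
    by (simp add: hcontent_def ennreal_mult[symmetric] ennreal_leI)
qed simp

lemma hausdorff_approx_affine_image_le:
  fixes A :: "'a::euclidean_space set"
  assumes "0 < c"
  shows "hausdorff_approx s (c * \<delta>) ((\<lambda>x. v + c *\<^sub>R x) ` A) \<le> ennreal (c ^ s) * hausdorff_approx s \<delta> A"
proof (rule ennreal_le_epsilon)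
  fix e :: real
  assume fin: "ennreal (c ^ s) * hausdorff_approx s \<delta> A < top" and "0 < e"
  have "hausdorff_approx s \<delta> A \<noteq> top"
    using fin \<open>0 < c\<close> by (auto simp: ennreal_mult_eq_top_iff)
  then have "hausdorff_approx s \<delta> A < hausdorff_approx s \<delta> A + ennreal (e / c ^ s)"
    using \<open>0 < e\<close> \<open>0 < c\<close> by (intro ennreal_less_add_pos) auto
  then obtain E where E: "E \<in> hausdorff_covers \<delta> A"
    "(\<Sum>i. hcontent s (E i)) < hausdorff_approx s \<delta> A + ennreal (e / c ^ s)"
    by (rule hausdorff_approx_obtain_cover)
  then have bounded: "bounded (E i)" and small: "diameter (E i) \<le> \<delta>" for i
    by (auto simp: hausdorff_covers_def)
  have "(\<lambda>x. v + c *\<^sub>R x) ` A \<subseteq> (\<Union>i. (\<lambda>x. v + c *\<^sub>R x) ` E i)"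
    using E(1) unfolding hausdorff_covers_def by blast
  then have "hausdorff_approx s (c * \<delta>) ((\<lambda>x. v + c *\<^sub>R x) ` A)
      \<le> (\<Sum>i. hcontent s ((\<lambda>x. v + c *\<^sub>R x) ` E i))"
  proof (rule hausdorff_approx_le_cover)
    fix i
    show "bounded ((\<lambda>x. v + c *\<^sub>R x) ` E i)"
      by (rule bounded_affine_image[OF bounded])
    show "diameter ((\<lambda>x. v + c *\<^sub>R x) ` E i) \<le> c * \<delta>"
      using diameter_affine_image_le[OF \<open>0 < c\<close> bounded[of i], where v=v] small[of i] \<open>0 < c\<close>
      by (meson mult_left_mono less_imp_le order_trans)
  qed
  also have "\<dots> \<le> (\<Sum>i. ennreal (c ^ s) * hcontent s (E i))"
    by (intro suminf_le hcontent_affine_image_le \<open>0 < c\<close> bounded) auto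
  also have "\<dots> = ennreal (c ^ s) * (\<Sum>i. hcontent s (E i))"
    by (rule ennreal_suminf_cmult)
  also have "\<dots> \<le> ennreal (c ^ s) * (hausdorff_approx s \<delta> A + ennreal (e / c ^ s))"
    using E(2) by (intro mult_left_mono) auto
  also have "\<dots> = ennreal (c ^ s) * hausdorff_approx s \<delta> A + ennreal e"
    using \<open>0 < c\<close> \<open>0 < e\<close> by (simp add: distrib_left ennreal_mult[symmetric])
  finally show "hausdorff_approx s (c * \<delta>) ((\<lambda>x. v + c *\<^sub>R x) ` A)
      \<le> ennreal (c ^ s) * hausdorff_approx s \<delta> A + ennreal e" .
qed

lemma hausdorff_outer_affine_image_le:
  fixes A :: "'a::euclidean_space set"
  assumes "0 < c"
  shows "hausdorff_outer s ((\<lambda>x. v + c *\<^sub>R x) ` A) \<le> ennreal (c ^ s) * hausdorff_outer s A"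
proof (rule hausdorff_outer_leI)
  fix \<delta> :: real assume "0 < \<delta>"
  have "hausdorff_approx s \<delta> ((\<lambda>x. v + c *\<^sub>R x) ` A)
      = hausdorff_approx s (c * (\<delta> / c)) ((\<lambda>x. v + c *\<^sub>R x) ` A)"
    using \<open>0 < c\<close> by simp
  also have "\<dots> \<le> ennreal (c ^ s) * hausdorff_approx s (\<delta> / c) A"
    by (rule hausdorff_approx_affine_image_le[OF \<open>0 < c\<close>])
  also have "\<dots> \<le> ennreal (c ^ s) * hausdorff_outer s A"
    using \<open>0 < c\<close> \<open>0 < \<delta>\<close> by (intro mult_left_mono hausdorff_approx_le_outer) auto
  finally show "hausdorff_approx s \<delta> ((\<lambda>x. v + c *\<^sub>R x) ` A) \<le> ennreal (c ^ s) * hausdorff_outer s A" .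
qed

lemma affine_image_inverse:
  fixes A :: "'a::real_vector set"
  assumes "0 < c"
  shows "(\<lambda>y. - (1/c) *\<^sub>R v + (1/c) *\<^sub>R y) ` (\<lambda>x. v + c *\<^sub>R x) ` A = A"
    and "(\<lambda>x. v + c *\<^sub>R x) ` (\<lambda>y. - (1/c) *\<^sub>R v + (1/c) *\<^sub>R y) ` A = A"
  using assms by (auto simp: image_image algebra_simps)

lemma hausdorff_outer_affine_image:
  fixes A :: "'a::euclidean_space set"
  assumes "0 < c"
  shows "hausdorff_outer s ((\<lambda>x. v + c *\<^sub>R x) ` A) = ennreal (c ^ s) * hausdorff_outer s A"
proof (rule antisym)
  show "hausdorff_outer s ((\<lambda>x. v + c *\<^sub>R x) ` A) \<le> ennreal (c ^ s) * hausdorff_outer s A"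
    by (rule hausdorff_outer_affine_image_le[OF \<open>0 < c\<close>])
  have "hausdorff_outer s A \<le> ennreal ((1/c) ^ s) * hausdorff_outer s ((\<lambda>x. v + c *\<^sub>R x) ` A)"
    using hausdorff_outer_affine_image_le[of "1/c" s "- (1/c) *\<^sub>R v" "(\<lambda>x. v + c *\<^sub>R x) ` A"] \<open>0 < c\<close>
    unfolding affine_image_inverse(1)[OF \<open>0 < c\<close>] by simp
  then have "ennreal (c ^ s) * hausdorff_outer s A
      \<le> ennreal (c ^ s) * (ennreal ((1/c) ^ s) * hausdorff_outer s ((\<lambda>x. v + c *\<^sub>R x) ` A))"
    by (rule mult_left_mono) simp
  also have "\<dots> = hausdorff_outer s ((\<lambda>x. v + c *\<^sub>R x) ` A)"
    using \<open>0 < c\<close>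
    by (simp add: mult.assoc[symmetric] ennreal_mult[symmetric] power_mult_distrib[symmetric])
  finally show "ennreal (c ^ s) * hausdorff_outer s A \<le> hausdorff_outer s ((\<lambda>x. v + c *\<^sub>R x) ` A)" .
qed

lemma affine_image_in_sets_hausdorff_measure:
  fixes B :: "'a::euclidean_space set"
  assumes "0 < c" "B \<in> sets (hausdorff_measure s)"
  shows "(\<lambda>x. v + c *\<^sub>R x) ` B \<in> sets (hausdorff_measure s)"
  unfolding sets_hausdorff_measure lambda_system_def
proof (safe)
  fix X :: "'a set"
  let ?f = "\<lambda>x. v + c *\<^sub>R x"
  define Y where "Y = (\<lambda>y. - (1/c) *\<^sub>R v + (1/c) *\<^sub>R y) ` X"
  have X: "X = ?f ` Y"
    unfolding Y_def by (rule affine_image_inverse(2)[OF \<open>0 < c\<close>, symmetric])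
  have "inj ?f"
    using \<open>0 < c\<close> by (auto simp: inj_def)
  then have "?f ` B \<inter> X = ?f ` (B \<inter> Y)" "(UNIV - ?f ` B) \<inter> X = ?f ` ((UNIV - B) \<inter> Y)"
    unfolding X by (auto simp: inj_def)
  moreover have "hausdorff_outer s (B \<inter> Y) + hausdorff_outer s ((UNIV - B) \<inter> Y) = hausdorff_outer s Y"
    using assms(2) by (auto simp: sets_hausdorff_measure lambda_system_def)
  ultimately show "hausdorff_outer s (?f ` B \<inter> X) + hausdorff_outer s ((UNIV - ?f ` B) \<inter> X) =
      hausdorff_outer s X"
    unfolding X using \<open>0 < c\<close> by (simp add: hausdorff_outer_affine_image distrib_left[symmetric])
qed auto

lemma emeasure_hausdorff_measure_affine_image:
  fixes B :: "'a::euclidean_space set"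
  assumes "0 < c" "B \<in> sets (hausdorff_measure s)"
  shows "emeasure (hausdorff_measure s) ((\<lambda>x. v + c *\<^sub>R x) ` B) =
    ennreal (c ^ s) * emeasure (hausdorff_measure s) B"
proof -
  have "emeasure (hausdorff_measure s) ((\<lambda>x. v + c *\<^sub>R x) ` B) = hausdorff_outer s ((\<lambda>x. v + c *\<^sub>R x) ` B)"
    by (rule emeasure_hausdorff_measure[OF affine_image_in_sets_hausdorff_measure[OF assms]])
  also have "\<dots> = ennreal (c ^ s) * hausdorff_outer s B"
    by (rule hausdorff_outer_affine_image[OF assms(1)])
  also have "hausdorff_outer s B = emeasure (hausdorff_measure s) B"
    by (rule emeasure_hausdorff_measure[OF assms(2), symmetric])
  finally show ?thesis .
qed

lemma scaleR_vimage_eq_image: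
  fixes X :: "'a::real_vector set"
  assumes "0 < t"
  shows "(\<lambda>x. (1 / t) *\<^sub>R x) -` X = (\<lambda>x. t *\<^sub>R x) ` X"
proof
  show "(\<lambda>x. (1 / t) *\<^sub>R x) -` X \<subseteq> (\<lambda>x. t *\<^sub>R x) ` X"
  proof
    fix x assume "x \<in> (\<lambda>x. (1 / t) *\<^sub>R x) -` X"
    moreover have "x = t *\<^sub>R ((1 / t) *\<^sub>R x)"
      using assms by simp
    ultimately show "x \<in> (\<lambda>x. t *\<^sub>R x) ` X"
      by blast
  qed
  show "(\<lambda>x. t *\<^sub>R x) ` X \<subseteq> (\<lambda>x. (1 / t) *\<^sub>R x) -` X"
    using assms by auto
qed

lemma scaleR_vimage_hausdorff_measure:
  fixes X :: "'a::euclidean_space set"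
  assumes "0 < t"
  shows "(\<lambda>x. (1 / t) *\<^sub>R x) -` X \<inter> space (hausdorff_measure s) = (\<lambda>x. 0 + t *\<^sub>R x) ` X"
  using scaleR_vimage_eq_image[OF assms, of X] by simp

lemma measurable_scaleR_hausdorff_measure:
  assumes "0 < t"
  shows "(\<lambda>x. (1 / t) *\<^sub>R x) \<in> measurable (hausdorff_measure s) (hausdorff_measure s :: 'a::euclidean_space measure)"
proof (rule measurableI)
  fix X :: "'a set" assume "X \<in> sets (hausdorff_measure s)"
  then show "(\<lambda>x. (1 / t) *\<^sub>R x) -` X \<inter> space (hausdorff_measure s) \<in> sets (hausdorff_measure s)"
    unfolding scaleR_vimage_hausdorff_measure[OF assms] by (rule affine_image_in_sets_hausdorff_measure[OF assms])
qed simp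

lemma distr_hausdorff_measure_scaleR:
  assumes "0 < t"
  shows "distr (hausdorff_measure s) (hausdorff_measure s) (\<lambda>x. (1 / t) *\<^sub>R x) =
    density (hausdorff_measure s :: 'a::euclidean_space measure) (\<lambda>_. ennreal (t ^ s))"
    (is "distr ?H ?H ?f = _")
proof -
  note image = scaleR_vimage_hausdorff_measure[OF assms]
  note measurable = measurable_scaleR_hausdorff_measure[OF assms]
  show ?thesis
  proof (rule measure_eqI)
    fix X assume "X \<in> sets (distr ?H ?H ?f)"
    then have X: "X \<in> sets ?H"
      by simp
    have "emeasure (distr ?H ?H ?f) X = emeasure ?H ((\<lambda>x. 0 + t *\<^sub>R x) ` X)"
      using emeasure_distr[OF measurable X] unfolding image .
    also have "\<dots> = ennreal (t ^ s) * emeasure ?H X"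
      by (rule emeasure_hausdorff_measure_affine_image[OF assms X])
    finally show "emeasure (distr ?H ?H ?f) X = emeasure (density ?H (\<lambda>_. ennreal (t ^ s))) X"
      using emeasure_density_const[OF X] by simp
  qed simp
qed

lemma nn_integral_hausdorff_measure_scaleR:
  assumes "0 < t" "f \<in> borel_measurable borel"
  shows "(\<integral>\<^sup>+x. f x \<partial>hausdorff_measure s) =
    ennreal (t ^ s) * (\<integral>\<^sup>+y. f (t *\<^sub>R y) \<partial>hausdorff_measure s)"
    (is "_ = _ * integral\<^sup>N ?H ?g")
proof -
  have [measurable]: "f \<in> borel_measurable borel"
    by (rule assms(2))
  have g: "?g \<in> borel_measurable ?H"
    by (intro borel_measurable_hausdorff_measure) measurable
  note measurable = measurable_scaleR_hausdorff_measure[OF assms(1)]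
  have "(\<integral>\<^sup>+x. f x \<partial>?H) = (\<integral>\<^sup>+x. ?g ((1 / t) *\<^sub>R x) \<partial>?H)"
    using assms(1) by simp
  also have "\<dots> = (\<integral>\<^sup>+y. ?g y \<partial>distr ?H ?H (\<lambda>x. (1 / t) *\<^sub>R x))"
    using g by (intro nn_integral_distr[OF measurable, symmetric]) simp
  also have "\<dots> = ennreal (t ^ s) * integral\<^sup>N ?H ?g"
    unfolding distr_hausdorff_measure_scaleR[OF assms(1)] using g
    by (simp add: nn_integral_density nn_integral_cmult)
  finally show ?thesis .
qed

lemma ennreal_eq_zero_if_multiples_bounded:
  fixes a b :: ennreal
  assumes "\<And>m. of_nat m * a \<le> b" "b \<noteq> top"
  shows "a = 0"
proof (rule ccontr)
  assume "a \<noteq> 0"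
  have "a \<noteq> top"
    using assms(1)[of 1] assms(2) by (auto simp: top_unique)
  then obtain r where "a = ennreal r" "0 < r"
    using \<open>a \<noteq> 0\<close> by (cases a) (auto simp: ennreal_eq_0_iff less_le)
  obtain r' where "b = ennreal r'" "0 \<le> r'"
    using assms(2) by (cases b) auto
  obtain m :: nat where "r' / r < real m"
    using reals_Archimedean2 by blast
  moreover have "real m * r \<le> r'"
    using assms(1)[of m] \<open>a = ennreal r\<close> \<open>b = ennreal r'\<close> \<open>0 < r\<close> \<open>0 \<le> r'\<close>
    by (auto simp: ennreal_of_nat_eq_real_of_nat ennreal_mult'[symmetric] ennreal_le_iff2)
  ultimately show False
    using \<open>0 < r\<close> by (simp add: field_simps)
qed

(* For every m, m disjoint copies of E, each of measure at least 2^(-s) times that of E, fit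
   into F. *)
lemma hausdorff_measure_zero_if_disjoint_homothets:
  fixes E F :: "'a::euclidean_space set" and p :: 'a
  defines "D \<sigma> \<equiv> (\<lambda>x. (1 - \<sigma>) *\<^sub>R p + \<sigma> *\<^sub>R x) ` E"
  assumes "E \<in> sets (hausdorff_measure s)" "F \<in> sets (hausdorff_measure s)"
    and "emeasure (hausdorff_measure s) F \<noteq> top"
    and subset: "\<And>\<sigma>. 1/2 \<le> \<sigma> \<Longrightarrow> \<sigma> < 1 \<Longrightarrow> D \<sigma> \<subseteq> F"
    and disjoint: "\<And>\<sigma> \<tau>. 1/2 \<le> \<sigma> \<Longrightarrow> \<sigma> < \<tau> \<Longrightarrow> \<tau> < 1 \<Longrightarrow> D \<sigma> \<inter> D \<tau> = {}"
  shows "emeasure (hausdorff_measure s) E = 0"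
proof -
  let ?\<mu> = "emeasure (hausdorff_measure s)"
  have "ennreal ((1/2) ^ s) * ?\<mu> E = 0"
  proof (rule ennreal_eq_zero_if_multiples_bounded[OF _ assms(4)])
  fix m :: nat
  define \<sigma> where "\<sigma> i = real (m + i + 1) / real (2 * m + 2)" for i
  have \<sigma>: "1/2 \<le> \<sigma> i" "\<sigma> i < 1" if "i < m" for i
    using that by (auto simp: \<sigma>_def field_simps)
  have \<sigma>_less: "\<sigma> i < \<sigma> j" if "i < j" for i j
    using that by (simp add: \<sigma>_def divide_strict_right_mono)
  have measurable: "D (\<sigma> i) \<in> sets (hausdorff_measure s)" and
    measure: "?\<mu> (D (\<sigma> i)) = ennreal (\<sigma> i ^ s) * ?\<mu> E" if "i < m" for i
    using \<sigma>[OF that] assms(2) unfolding D_def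
    by (auto intro!: affine_image_in_sets_hausdorff_measure emeasure_hausdorff_measure_affine_image)
  have "disjoint_family_on (\<lambda>i. D (\<sigma> i)) {..<m}"
    unfolding disjoint_family_on_def
    by (metis \<sigma> \<sigma>_less disjoint lessThan_iff Int_commute nat_neq_iff)
  then have "(\<Sum>i<m. ?\<mu> (D (\<sigma> i))) = ?\<mu> (\<Union>i<m. D (\<sigma> i))"
    using measurable by (intro sum_emeasure) auto
  also have "\<dots> \<le> ?\<mu> F"
    using subset \<sigma> by (intro emeasure_mono assms(3)) blast
  finally have sum_le: "(\<Sum>i<m. ?\<mu> (D (\<sigma> i))) \<le> ?\<mu> F" .
  have "ennreal ((1/2) ^ s) * ?\<mu> E \<le> ?\<mu> (D (\<sigma> i))" if "i < m" for i
    unfolding measure[OF that] using \<sigma>[OF that]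
    by (intro mult_right_mono ennreal_leI power_mono) auto
  then have "of_nat m * (ennreal ((1/2) ^ s) * ?\<mu> E) \<le> (\<Sum>i<m. ?\<mu> (D (\<sigma> i)))"
    using sum_mono[of "{..<m}" "\<lambda>_. ennreal ((1/2) ^ s) * ?\<mu> E"] by simp
  then show "of_nat m * (ennreal ((1/2) ^ s) * ?\<mu> E) \<le> ?\<mu> F"
    using sum_le by (rule order_trans)
  qed
  then show ?thesis
    by simp
qed

section \<open>Bounded pieces of hyperplanes\<close>

lemma hcontent_le_of_diameter_le:
  assumes "bounded E" "diameter E \<le> d"
  shows "hcontent s E \<le> ennreal (unit_ball_vol (real s) * (d / 2) ^ s)"
proof (cases "E = {}")
  case False
  have "(diameter E / 2) ^ s \<le> (d / 2) ^ s"
    using assms diameter_ge_0[OF assms(1)] by (intro power_mono) auto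
  then show ?thesis
    using False unit_ball_vol_nonneg[of "real s"]
    by (auto simp: hcontent_def intro!: ennreal_leI mult_left_mono)
qed simp

lemma norm_le_of_orthogonal:
  fixes u z :: "'a::euclidean_space"
  assumes "j \<in> Basis" "u \<bullet> j \<noteq> 0" "z \<bullet> u = 0" "0 \<le> h"
    and "\<And>b. b \<in> Basis - {j} \<Longrightarrow> \<bar>z \<bullet> b\<bar> \<le> h"
  shows "norm z \<le> h * ((\<Sum>b\<in>Basis - {j}. \<bar>u \<bullet> b\<bar>) / \<bar>u \<bullet> j\<bar> + real DIM('a))"
proof -
  let ?B = "Basis - {j} :: 'a set"
  have "0 = (\<Sum>b\<in>Basis. (z \<bullet> b) * (u \<bullet> b))"
    using assms(3) by (simp add: euclidean_inner[of z u])
  also have "\<dots> = (z \<bullet> j) * (u \<bullet> j) + (\<Sum>b\<in>?B. (z \<bullet> b) * (u \<bullet> b))"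
    by (rule sum.remove[OF finite_Basis assms(1)])
  finally have "\<bar>z \<bullet> j\<bar> * \<bar>u \<bullet> j\<bar> = \<bar>\<Sum>b\<in>?B. (z \<bullet> b) * (u \<bullet> b)\<bar>"
    by (metis abs_minus_cancel abs_mult add_eq_0_iff)
  also have "\<dots> \<le> (\<Sum>b\<in>?B. h * \<bar>u \<bullet> b\<bar>)"
    by (rule order_trans[OF sum_abs]) (auto simp: abs_mult intro!: sum_mono mult_right_mono assms(5))
  finally have zj: "\<bar>z \<bullet> j\<bar> \<le> h * (\<Sum>b\<in>?B. \<bar>u \<bullet> b\<bar>) / \<bar>u \<bullet> j\<bar>"
    using assms(2) by (simp add: field_simps sum_distrib_left)
  have "norm z \<le> (\<Sum>b\<in>Basis. \<bar>z \<bullet> b\<bar>)"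
    by (rule norm_le_l1)
  also have "\<dots> = \<bar>z \<bullet> j\<bar> + (\<Sum>b\<in>?B. \<bar>z \<bullet> b\<bar>)"
    by (rule sum.remove[OF finite_Basis assms(1)])
  also have "\<dots> \<le> h * (\<Sum>b\<in>?B. \<bar>u \<bullet> b\<bar>) / \<bar>u \<bullet> j\<bar> + h * real (card ?B)"
    using zj sum_mono[of ?B "\<lambda>b. \<bar>z \<bullet> b\<bar>" "\<lambda>_. h"] assms(5) by (intro add_mono) (auto simp: mult.commute)
  also have "\<dots> \<le> h * (\<Sum>b\<in>?B. \<bar>u \<bullet> b\<bar>) / \<bar>u \<bullet> j\<bar> + h * real DIM('a)"
    using assms(4) by (intro add_left_mono mult_left_mono) (auto simp: card_Diff_subset assms(1))
  finally show ?thesis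
    by (simp add: distrib_left)
qed

lemma unit_interval_index:
  assumes "0 \<le> t" "t \<le> real N" "0 < N"
  obtains i where "i < N" "real i \<le> t" "t \<le> real i + 1"
proof (cases "t < real N")
  case True
  then show ?thesis
    using that[of "nat \<lfloor>t\<rfloor>"] assms(1) by linarith
next
  case False
  then show ?thesis
    using that[of "N - 1"] assms by simp
qed

lemma cball_subset_grid_cells:
  fixes B :: "'a::euclidean_space set"
  assumes "B \<subseteq> Basis" "0 < h" "2 * R \<le> h * real N" "0 < N"
  shows "cball 0 R \<subseteq> (\<Union>k\<in>B \<rightarrow>\<^sub>E {..<N}.
    {x. \<forall>b\<in>B. - R + h * real (k b) \<le> x \<bullet> b \<and> x \<bullet> b \<le> - R + h * (real (k b) + 1)})"
proof
  fix x :: 'a assume "x \<in> cball 0 R"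
  have "\<exists>i<N. - R + h * real i \<le> x \<bullet> b \<and> x \<bullet> b \<le> - R + h * (real i + 1)" if "b \<in> B" for b
  proof -
    have "\<bar>x \<bullet> b\<bar> \<le> R"
      using Basis_le_norm[of b x] \<open>x \<in> cball 0 R\<close> assms(1) that by auto
    then have "0 \<le> (x \<bullet> b + R) / h" "(x \<bullet> b + R) / h \<le> real N"
      using assms(2,3) by (auto simp: field_simps)
    then obtain i where "i < N" "real i \<le> (x \<bullet> b + R) / h" "(x \<bullet> b + R) / h \<le> real i + 1"
      using unit_interval_index assms(4) by blast
    then show ?thesis
      using assms(2) by (auto simp: field_simps)
  qed
  then obtain k where "\<forall>b\<in>B. k b < N \<and> - R + h * real (k b) \<le> x \<bullet> b \<and> x \<bullet> b \<le> - R + h * (real (k b) + 1)"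
    by metis
  then show "x \<in> (\<Union>k\<in>B \<rightarrow>\<^sub>E {..<N}.
      {x. \<forall>b\<in>B. - R + h * real (k b) \<le> x \<bullet> b \<and> x \<bullet> b \<le> - R + h * (real (k b) + 1)})"
    by (intro UN_I[of "restrict k B"]) auto
qed

lemma norm_diff_le_in_hyperplane_cell:
  fixes u x y :: "'a::euclidean_space"
  assumes "j \<in> Basis" "u \<bullet> j \<noteq> 0" "0 \<le> h" "x \<bullet> u = y \<bullet> u"
    and "\<And>b. b \<in> Basis - {j} \<Longrightarrow> c b \<le> x \<bullet> b \<and> x \<bullet> b \<le> c b + h \<and> c b \<le> y \<bullet> b \<and> y \<bullet> b \<le> c b + h"
  shows "norm (x - y) \<le> h * ((\<Sum>b\<in>Basis - {j}. \<bar>u \<bullet> b\<bar>) / \<bar>u \<bullet> j\<bar> + real DIM('a))"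
proof (rule norm_le_of_orthogonal[OF assms(1,2) _ assms(3)])
  show "(x - y) \<bullet> u = 0"
    using assms(4) by (simp add: inner_diff_left)
  show "\<bar>(x - y) \<bullet> b\<bar> \<le> h" if "b \<in> Basis - {j}" for b
    using assms(5)[OF that] by (simp add: inner_diff_left abs_le_iff)
qed

lemma hausdorff_approx_hyperplane_cball_le:
  fixes u :: "'a::euclidean_space"
  assumes "j \<in> Basis" "u \<bullet> j \<noteq> 0" "0 < R" "0 < \<delta>"
  defines "L \<equiv> (\<Sum>b\<in>Basis - {j}. \<bar>u \<bullet> b\<bar>) / \<bar>u \<bullet> j\<bar> + real DIM('a)"
    and "s \<equiv> DIM('a) - 1"
  shows "hausdorff_approx s \<delta> ({x. x \<bullet> u = a} \<inter> cball 0 R) \<le> ennreal (unit_ball_vol (real s) * (R * L) ^ s)"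
proof -
  define B where "B = Basis - {j}"
  have "0 < L"
    by (auto simp: L_def intro!: add_nonneg_pos sum_nonneg)
  define N where "N = nat \<lceil>2 * R * L / \<delta>\<rceil> + 1"
  define h where "h = 2 * R / real N"
  have "0 < N" "0 < h" "2 * R \<le> h * real N"
    using \<open>0 < R\<close> by (auto simp: N_def h_def)
  have "2 * R * L / \<delta> \<le> real N"
    unfolding N_def by linarith
  then have "h * L \<le> \<delta>"
    using \<open>0 < \<delta>\<close> \<open>0 < N\<close> by (simp add: h_def field_simps)
  define Q where "Q k = {x. x \<bullet> u = a \<and>
    (\<forall>b\<in>B. - R + h * real (k b) \<le> x \<bullet> b \<and> x \<bullet> b \<le> - R + h * (real (k b) + 1))}" for k
  have small: "norm (x - y) \<le> h * L" if "x \<in> Q k" "y \<in> Q k" for x y k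
    unfolding L_def
    by (rule norm_diff_le_in_hyperplane_cell[OF assms(1,2), where c = "\<lambda>b. - R + h * real (k b)"])
      (use that \<open>0 < h\<close> in \<open>auto simp: Q_def B_def algebra_simps\<close>)
  have bounded: "bounded (Q k)" for k
    unfolding bounded_two_points using small by (auto simp: dist_norm)
  have diameter: "diameter (Q k) \<le> h * L" for k
    by (rule diameter_le) (use small \<open>0 < h\<close> \<open>0 < L\<close> in auto)
  define I where "I = B \<rightarrow>\<^sub>E {..<N}"
  have "finite I" "card I = N ^ s"
    using assms(1) by (auto simp: I_def B_def s_def card_PiE card_Diff_subset intro: finite_PiE)
  have "{x. x \<bullet> u = a} \<inter> cball 0 R \<subseteq> (\<Union>k\<in>I. Q k)"
  proof
    fix x assume x: "x \<in> {x. x \<bullet> u = a} \<inter> cball 0 R"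
    then obtain k where "k \<in> I"
      "\<forall>b\<in>B. - R + h * real (k b) \<le> x \<bullet> b \<and> x \<bullet> b \<le> - R + h * (real (k b) + 1)"
      using cball_subset_grid_cells[of B h R N] \<open>0 < h\<close> \<open>2 * R \<le> h * real N\<close> \<open>0 < N\<close>
      unfolding I_def B_def by blast
    then show "x \<in> (\<Union>k\<in>I. Q k)"
      using x by (auto simp: Q_def)
  qed
  then have "hausdorff_approx s \<delta> ({x. x \<bullet> u = a} \<inter> cball 0 R) \<le> (\<Sum>k\<in>I. hcontent s (Q k))"
    using \<open>finite I\<close> bounded diameter \<open>h * L \<le> \<delta>\<close> \<open>0 < \<delta>\<close>
    by (intro hausdorff_approx_le_finite_cover) (auto intro: order_trans)
  also have "\<dots> \<le> (\<Sum>k\<in>I. ennreal (unit_ball_vol (real s) * (h * L / 2) ^ s))"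
    by (intro sum_mono hcontent_le_of_diameter_le bounded diameter)
  also have "\<dots> = ennreal (real (N ^ s) * (unit_ball_vol (real s) * (h * L / 2) ^ s))"
    using \<open>card I = N ^ s\<close> \<open>0 < h\<close> \<open>0 < L\<close>
    by (simp add: ennreal_of_nat_eq_real_of_nat ennreal_mult' less_imp_le)
  also have "real (N ^ s) * (unit_ball_vol (real s) * (h * L / 2) ^ s) = unit_ball_vol (real s) * (R * L) ^ s"
    using \<open>0 < N\<close> by (simp add: h_def power_divide power_mult_distrib)
  finally show ?thesis .
qed

lemma hausdorff_outer_hyperplane_cball_finite:
  fixes u :: "'a::euclidean_space"
  assumes "u \<noteq> 0"
  shows "hausdorff_outer (DIM('a) - 1) ({x. x \<bullet> u = a} \<inter> cball 0 R) \<noteq> top"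
proof -
  obtain j where j: "j \<in> Basis" "u \<bullet> j \<noteq> 0"
    using assms euclidean_all_zero_iff by blast
  define R' where "R' = max R 1"
  have "hausdorff_outer (DIM('a) - 1) ({x. x \<bullet> u = a} \<inter> cball 0 R) \<le>
      hausdorff_outer (DIM('a) - 1) ({x. x \<bullet> u = a} \<inter> cball 0 R')"
    by (rule hausdorff_outer_mono) (auto simp: R'_def)
  also have "\<dots> \<le> ennreal (unit_ball_vol (real (DIM('a) - 1)) *
      (R' * ((\<Sum>b\<in>Basis - {j}. \<bar>u \<bullet> b\<bar>) / \<bar>u \<bullet> j\<bar> + real DIM('a))) ^ (DIM('a) - 1))"
    by (rule hausdorff_outer_leI, rule hausdorff_approx_hyperplane_cball_le[OF j]) (auto simp: R'_def)
  finally show ?thesis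
    by (metis ennreal_neq_top neq_top_trans)
qed

section \<open>Truncated cones\<close>

lemma interior_polar_cone_uniform:
  fixes C :: "'a::euclidean_space set"
  assumes "u \<in> interior (polar_cone C)"
  obtains e where "0 < e" "\<And>x. x \<in> C \<Longrightarrow> x \<bullet> u \<le> - e * norm x"
proof -
  obtain e where "0 < e" "ball u e \<subseteq> polar_cone C"
    using assms mem_interior by blast
  have "x \<bullet> u \<le> - (e / 2) * norm x" if "x \<in> C" for x
  proof (cases "x = 0")
    case False
    define v where "v = u + (e / 2 / norm x) *\<^sub>R x"
    have "dist u v < e"
      using False \<open>0 < e\<close> by (simp add: v_def dist_norm)
    then have "v \<bullet> x \<le> 0"
      using \<open>ball u e \<subseteq> polar_cone C\<close> that by (auto simp: polar_cone_def)
    moreover have "v \<bullet> x = u \<bullet> x + (e / 2) * norm x"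
      using False by (simp add: v_def inner_add_left power2_norm_eq_inner[symmetric] power2_eq_square)
    ultimately show ?thesis
      by (simp add: inner_commute)
  qed simp
  then show ?thesis
    using that[of "e / 2"] \<open>0 < e\<close> by auto
qed

lemma cone_scaleR_interior:
  fixes C :: "'a::euclidean_space set"
  assumes "cone C" "0 < c" "z \<in> interior C"
  shows "c *\<^sub>R z \<in> interior C"
proof -
  have "(\<lambda>x. c *\<^sub>R x) ` interior C \<subseteq> C"
  proof (rule image_subsetI)
    fix y assume "y \<in> interior C"
    then have "y \<in> C"
      using interior_subset by blast
    then show "c *\<^sub>R y \<in> C"
      using assms(1,2) unfolding cone_def by simp
  qed
  moreover have "open ((\<lambda>x. c *\<^sub>R x) ` interior C)"
    using assms(2) by (intro open_scaling) auto
  ultimately have "(\<lambda>x. c *\<^sub>R x) ` interior C \<subseteq> interior C"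
    by (rule interior_maximal)
  then show ?thesis
    using assms(3) by blast
qed

lemma unit_vector_eq_if_halfspace_ball:
  fixes u v :: "'a::euclidean_space"
  assumes "0 < r" "norm u = 1" "norm v = 1"
    and halfspace: "\<And>d. d \<bullet> v \<le> 0 \<Longrightarrow> norm d < r \<Longrightarrow> d \<bullet> u \<le> 0"
  shows "u = v"
proof -
  have vv: "v \<bullet> v = 1"
    using assms(3) by (simp add: power2_norm_eq_inner[symmetric])
  have "(- (r / 2) *\<^sub>R v) \<bullet> u \<le> 0"
    using assms(1,3) vv by (intro halfspace) auto
  then have "0 \<le> u \<bullet> v"
    using assms(1) by (simp add: inner_commute zero_le_mult_iff)
  define w where "w = u - (u \<bullet> v) *\<^sub>R v"
  have "w \<bullet> v = 0"
    using vv by (simp add: w_def inner_diff_left)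
  have "w = 0"
  proof (rule ccontr)
    assume "w \<noteq> 0"
    define c where "c = r / (2 * norm w)"
    have "0 < c"
      using \<open>w \<noteq> 0\<close> assms(1) by (simp add: c_def)
    have "(c *\<^sub>R w) \<bullet> u \<le> 0"
      using \<open>w \<bullet> v = 0\<close> \<open>w \<noteq> 0\<close> assms(1) by (intro halfspace) (auto simp: c_def)
    moreover have "w \<bullet> u = w \<bullet> w"
      using \<open>w \<bullet> v = 0\<close> by (simp add: w_def inner_diff_right inner_commute)
    ultimately have "w \<bullet> w \<le> 0"
      using \<open>0 < c\<close> by (simp add: mult_le_0_iff)
    then show False
      using \<open>w \<noteq> 0\<close> inner_gt_zero_iff[of w] by linarith
  qed
  then have u: "u = (u \<bullet> v) *\<^sub>R v"
    by (simp add: w_def)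
  then have "norm u = \<bar>u \<bullet> v\<bar>"
    using assms(3) by (metis mult.right_neutral norm_scaleR)
  then have "u \<bullet> v = 1"
    using assms(2) \<open>0 \<le> u \<bullet> v\<close> by simp
  then show ?thesis
    using u by simp
qed

locale cone_direction =
  fixes C :: "'a::euclidean_space set" and u\<^sub>0 :: 'a
  assumes closed_C: "closed C" and convex_C: "convex C" and cone_C: "cone C"
    and interior_C: "interior C \<noteq> {}" and u\<^sub>0_Omega: "u\<^sub>0 \<in> Omega C"
begin

definition face :: "real \<Rightarrow> 'a set" where
  "face t = {x \<in> C. x \<bullet> u\<^sub>0 = - t}"

definition truncation :: "real \<Rightarrow> 'a set" where
  "truncation t = C \<inter> {x. x \<bullet> u\<^sub>0 \<le> - t}"

definition face_boundary :: "real \<Rightarrow> 'a set" where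
  "face_boundary t = face t - interior C"

lemma norm_u\<^sub>0: "norm u\<^sub>0 = 1"
  using u\<^sub>0_Omega by (simp add: Omega_def)

lemma inner_u\<^sub>0_u\<^sub>0: "u\<^sub>0 \<bullet> u\<^sub>0 = 1"
  using norm_u\<^sub>0 by (simp add: power2_norm_eq_inner[symmetric])

lemma Omega_inner_nonpos:
  assumes "u \<in> Omega C" "x \<in> C"
  shows "x \<bullet> u \<le> 0"
proof -
  have "u \<in> polar_cone C"
    using assms(1) interior_subset by (auto simp: Omega_def)
  then have "u \<bullet> x \<le> 0"
    using assms(2) by (simp add: polar_cone_def)
  then show ?thesis
    by (simp add: inner_commute)
qed

lemma convex_cone_C: "convex_cone C"
  using convex_C cone_C interior_C interior_subset
  by (auto simp: convex_cone_def conic_def cone_def)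

lemma bounded_face: "bounded (face t)"
proof -
  obtain e where e: "0 < e" "\<And>x. x \<in> C \<Longrightarrow> x \<bullet> u\<^sub>0 \<le> - e * norm x"
    using interior_polar_cone_uniform u\<^sub>0_Omega by (auto simp: Omega_def)
  have "norm x \<le> t / e" if "x \<in> face t" for x
  proof -
    have "x \<in> C" "x \<bullet> u\<^sub>0 = - t"
      using that by (auto simp: face_def)
    then have "e * norm x \<le> t"
      using e(2)[of x] by linarith
    then show ?thesis
      using \<open>0 < e\<close> by (simp add: field_simps)
  qed
  then have "face t \<subseteq> cball 0 (t / e)"
    by auto
  then show ?thesis
    using bounded_cball bounded_subset by blast
qed

lemma face_norm_ge: "x \<in> face t \<Longrightarrow> t \<le> norm x"
  using Cauchy_Schwarz_ineq2[of x u\<^sub>0] norm_u\<^sub>0 by (auto simp: face_def)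

lemma closed_face: "closed (face t)"
proof -
  have "face t = C \<inter> {x. u\<^sub>0 \<bullet> x = - t}"
    by (auto simp: face_def inner_commute)
  then show ?thesis
    using closed_C by (simp add: closed_Int closed_hyperplane)
qed

lemma convex_face: "convex (face t)"
proof -
  have "face t = C \<inter> {x. u\<^sub>0 \<bullet> x = - t}"
    by (auto simp: face_def inner_commute)
  then show ?thesis
    using convex_C by (simp add: convex_Int convex_hyperplane)
qed

lemma closed_face_boundary: "closed (face_boundary t)"
  unfolding face_boundary_def using closed_face by (simp add: closed_Diff)

lemma closed_truncation: "closed (truncation t)"
proof -
  have "truncation t = C \<inter> {x. u\<^sub>0 \<bullet> x \<le> - t}"
    by (auto simp: truncation_def inner_commute)
  then show ?thesis
    using closed_C by (simp add: closed_Int closed_halfspace_le)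
qed

lemma convex_truncation: "convex (truncation t)"
proof -
  have "truncation t = C \<inter> {x. u\<^sub>0 \<bullet> x \<le> - t}"
    by (auto simp: truncation_def inner_commute)
  then show ?thesis
    using convex_C by (simp add: convex_Int convex_halfspace_le)
qed

lemma interior_point_on_face:
  obtains p where "p \<in> interior C" "p \<bullet> u\<^sub>0 = -1"
proof -
  obtain z where z: "z \<in> interior C"
    using interior_C by blast
  obtain e where e: "0 < e" "\<And>x. x \<in> C \<Longrightarrow> x \<bullet> u\<^sub>0 \<le> - e * norm x"
    using interior_polar_cone_uniform u\<^sub>0_Omega by (auto simp: Omega_def)
  have "z \<noteq> 0"
  proof
    assume "z = 0"
    then obtain r where "0 < r" "ball 0 r \<subseteq> C"
      using z mem_interior by blast
    then have "(r / 2) *\<^sub>R u\<^sub>0 \<in> C"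
      using norm_u\<^sub>0 by (auto simp: dist_norm)
    then have "((r / 2) *\<^sub>R u\<^sub>0) \<bullet> u\<^sub>0 \<le> 0"
      by (rule Omega_inner_nonpos[OF u\<^sub>0_Omega])
    then show False
      using \<open>0 < r\<close> inner_u\<^sub>0_u\<^sub>0 by simp
  qed
  then have "0 < e * norm z"
    using \<open>0 < e\<close> by simp
  moreover have "z \<bullet> u\<^sub>0 \<le> - e * norm z"
    using e(2) z interior_subset by blast
  ultimately have "z \<bullet> u\<^sub>0 < 0"
    by linarith
  define c where "c = - 1 / (z \<bullet> u\<^sub>0)"
  have "0 < c"
    using \<open>z \<bullet> u\<^sub>0 < 0\<close> by (simp add: c_def)
  then have "c *\<^sub>R z \<in> interior C"
    by (rule cone_scaleR_interior[OF cone_C _ z])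
  moreover have "(c *\<^sub>R z) \<bullet> u\<^sub>0 = -1"
    using \<open>z \<bullet> u\<^sub>0 < 0\<close> by (simp add: c_def)
  ultimately show ?thesis ..
qed

lemma face_scaleR:
  assumes "0 < t"
  shows "(\<lambda>x. t *\<^sub>R x) ` face 1 = face t"
proof
  show "(\<lambda>x. t *\<^sub>R x) ` face 1 \<subseteq> face t"
    using assms cone_C by (auto simp: face_def cone_def)
  show "face t \<subseteq> (\<lambda>x. t *\<^sub>R x) ` face 1"
  proof
    fix x assume "x \<in> face t"
    then have "(1 / t) *\<^sub>R x \<in> face 1"
      using assms cone_C by (auto simp: face_def cone_def)
    moreover have "x = t *\<^sub>R ((1 / t) *\<^sub>R x)"
      using assms by simp
    ultimately show "x \<in> (\<lambda>x. t *\<^sub>R x) ` face 1"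
      by blast
  qed
qed

lemma face_boundary_scaleR:
  assumes "0 < t"
  shows "(\<lambda>x. t *\<^sub>R x) ` face_boundary 1 = face_boundary t"
proof -
  have "t *\<^sub>R x \<in> interior C \<longleftrightarrow> x \<in> interior C" for x
    using cone_scaleR_interior[OF cone_C assms, of x]
      cone_scaleR_interior[OF cone_C, of "1 / t" "t *\<^sub>R x"] assms by auto
  then show ?thesis
    unfolding face_boundary_def face_scaleR[OF assms, symmetric] by auto
qed

lemma face_subset_truncation: "face t \<subseteq> truncation t"
  by (auto simp: face_def truncation_def)

lemma scaleR_interior_point_in_face:
  assumes "p \<in> interior C" "p \<bullet> u\<^sub>0 = -1" "0 \<le> t"
  shows "t *\<^sub>R p \<in> face t" and "t *\<^sub>R p \<in> truncation t"
proof -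
  have "p \<in> C"
    using assms(1) interior_subset by blast
  then show "t *\<^sub>R p \<in> face t"
    using assms(2,3) cone_C by (simp add: face_def cone_def)
  then show "t *\<^sub>R p \<in> truncation t"
    using face_subset_truncation by blast
qed

lemma pseudo_cone_truncation:
  assumes "0 < t"
  shows "pseudo_cone (truncation t)"
  unfolding pseudo_cone_def
proof (intro conjI allI impI ballI)
  obtain p where "p \<in> interior C" "p \<bullet> u\<^sub>0 = -1"
    by (rule interior_point_on_face)
  then show "truncation t \<noteq> {}"
    using scaleR_interior_point_in_face(2) assms by (metis empty_iff less_imp_le)
  show "closed (truncation t)" "convex (truncation t)"
    by (rule closed_truncation, rule convex_truncation)
  show "0 \<notin> truncation t"
    using assms by (simp add: truncation_def)
  fix l :: real and x assume "1 \<le> l" "x \<in> truncation t"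
  then have "x \<in> C" "x \<bullet> u\<^sub>0 \<le> - t"
    by (auto simp: truncation_def)
  then have "l *\<^sub>R x \<in> C"
    using \<open>1 \<le> l\<close> cone_C by (simp add: cone_def)
  moreover have "l * (x \<bullet> u\<^sub>0) \<le> 1 * (x \<bullet> u\<^sub>0)"
    using \<open>1 \<le> l\<close> \<open>x \<bullet> u\<^sub>0 \<le> - t\<close> assms by (intro mult_right_mono_neg) auto
  then have "l * (x \<bullet> u\<^sub>0) \<le> - t"
    using \<open>x \<bullet> u\<^sub>0 \<le> - t\<close> by linarith
  ultimately show "l *\<^sub>R x \<in> truncation t"
    by (simp add: truncation_def)
qed

(* t p + k z stays in the truncation for all k; scaling by 1/(k+1) and letting k tend to
   infinity gives z in C. *)
lemma recession_cone_truncation_subset: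
  assumes "0 < t"
  shows "recession_cone (truncation t) \<subseteq> C"
proof
  fix z assume z: "z \<in> recession_cone (truncation t)"
  obtain p where "p \<in> interior C" "p \<bullet> u\<^sub>0 = -1"
    by (rule interior_point_on_face)
  then have x\<^sub>0: "t *\<^sub>R p \<in> truncation t"
    using assms by (intro scaleR_interior_point_in_face(2)) auto
  have shifted: "t *\<^sub>R p + real k *\<^sub>R z \<in> truncation t" for k
  proof (induction k)
    case (Suc k)
    then have "(t *\<^sub>R p + real k *\<^sub>R z) + z \<in> truncation t"
      using z by (simp add: recession_cone_def)
    then show ?case
      by (simp add: algebra_simps)
  qed (use x\<^sub>0 in simp)
  define y where "y n = inverse (real (Suc n)) *\<^sub>R (t *\<^sub>R p) + z" for n
  have "y n \<in> C" for n
  proof -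
    have "inverse (real (Suc n)) *\<^sub>R (t *\<^sub>R p + real (Suc n) *\<^sub>R z) \<in> C"
      using shifted[of "Suc n"] cone_C by (auto simp: truncation_def cone_def)
    then show ?thesis
      by (simp add: y_def scaleR_add_right)
  qed
  moreover have "y \<longlonglongrightarrow> 0 *\<^sub>R (t *\<^sub>R p) + z"
    unfolding y_def by (intro tendsto_intros LIMSEQ_inverse_real_of_nat)
  ultimately show "z \<in> C"
    using closed_sequentially[OF closed_C, of y z] by simp
qed

lemma recession_cone_truncation:
  assumes "0 < t"
  shows "recession_cone (truncation t) = C"
proof
  show "C \<subseteq> recession_cone (truncation t)"
  proof
    fix z assume "z \<in> C"
    have "x + z \<in> truncation t" if "x \<in> truncation t" for x
    proof -
      have "x + z \<in> C"
        using that \<open>z \<in> C\<close> convex_cone_add[OF convex_cone_C] by (auto simp: truncation_def)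
      moreover have "z \<bullet> u\<^sub>0 \<le> 0"
        by (rule Omega_inner_nonpos[OF u\<^sub>0_Omega \<open>z \<in> C\<close>])
      ultimately show ?thesis
        using that by (auto simp: truncation_def inner_add_left)
    qed
    then show "z \<in> recession_cone (truncation t)"
      by (simp add: recession_cone_def)
  qed
  show "recession_cone (truncation t) \<subseteq> C"
    by (rule recession_cone_truncation_subset[OF assms])
qed

lemma support_fun_truncation_u\<^sub>0:
  assumes "0 < t"
  shows "support_fun (truncation t) u\<^sub>0 = - t"
  unfolding support_fun_def
proof (rule antisym)
  obtain p where "p \<in> interior C" "p \<bullet> u\<^sub>0 = -1"
    by (rule interior_point_on_face)
  then have p: "t *\<^sub>R p \<in> truncation t" "u\<^sub>0 \<bullet> (t *\<^sub>R p) = - t"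
    using scaleR_interior_point_in_face(2)[of p t] assms by (auto simp: inner_commute)
  then show "(SUP y\<in>truncation t. u\<^sub>0 \<bullet> y) \<le> - t"
    by (intro cSUP_least) (auto simp: truncation_def inner_commute)
  have "bdd_above ((\<lambda>y. u\<^sub>0 \<bullet> y) ` truncation t)"
    using assms by (intro bdd_aboveI[of _ "- t"]) (auto simp: truncation_def inner_commute)
  then show "- t \<le> (SUP y\<in>truncation t. u\<^sub>0 \<bullet> y)"
    using p cSUP_upper by metis
qed

lemma truncation_in_K_C_omega:
  assumes "0 < t" "u\<^sub>0 \<in> \<omega>" "\<omega> \<subseteq> Omega C"
  shows "truncation t \<in> K_C_omega C \<omega>"
  unfolding K_C_omega_def C_pseudo_cone_def
proof (intro CollectI conjI)
  show "pseudo_cone (truncation t)" "recession_cone (truncation t) = C"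
    using assms(1) by (rule pseudo_cone_truncation, rule recession_cone_truncation)
  have "x \<bullet> u \<le> support_fun (truncation t) u" if "x \<in> truncation t" "u \<in> \<omega>" for x u
  proof -
    have "u \<in> Omega C"
      using that(2) assms(3) by blast
    have "u \<bullet> y \<le> 0" if "y \<in> truncation t" for y
      using Omega_inner_nonpos[OF \<open>u \<in> Omega C\<close>, of y] that
      by (simp add: truncation_def inner_commute)
    then have "bdd_above ((\<lambda>y. u \<bullet> y) ` truncation t)"
      by (intro bdd_aboveI[of _ 0]) auto
    then show ?thesis
      unfolding support_fun_def using that(1) by (metis cSUP_upper inner_commute)
  qed
  then have "truncation t \<subseteq> C \<inter> (\<Inter>u\<in>\<omega>. halfspace_minus (truncation t) u)"
    by (auto simp: truncation_def halfspace_minus_def)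
  moreover have "C \<inter> (\<Inter>u\<in>\<omega>. halfspace_minus (truncation t) u) \<subseteq> truncation t"
  proof
    fix x assume "x \<in> C \<inter> (\<Inter>u\<in>\<omega>. halfspace_minus (truncation t) u)"
    then have "x \<in> C" "x \<bullet> u\<^sub>0 \<le> support_fun (truncation t) u\<^sub>0"
      using assms(2) by (auto simp: halfspace_minus_def)
    then show "x \<in> truncation t"
      using support_fun_truncation_u\<^sub>0[OF assms(1)] by (simp add: truncation_def)
  qed
  ultimately show "truncation t = C \<inter> (\<Inter>u\<in>\<omega>. halfspace_minus (truncation t) u)"
    by (rule antisym)
qed

lemma truncation_neq:
  assumes "0 < a" "a < b"
  shows "truncation a \<noteq> truncation b"
proof -
  obtain p where "p \<in> interior C" "p \<bullet> u\<^sub>0 = -1"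
    by (rule interior_point_on_face)
  then have "a *\<^sub>R p \<in> truncation a" "(a *\<^sub>R p) \<bullet> u\<^sub>0 = - a"
    using scaleR_interior_point_in_face(2)[of p a] assms by auto
  then have "a *\<^sub>R p \<in> truncation a" "a *\<^sub>R p \<notin> truncation b"
    using assms by (auto simp: truncation_def)
  then show ?thesis by blast
qed

(* Below the face, x could be pushed towards the origin inside the truncation, which forces
   x \<bullet> u \<ge> 0; but x \<bullet> u < 0 on C - {0} for u in Omega. *)
lemma rev_sph_image_truncation_subset_face:
  assumes "0 < t" "\<eta> \<subseteq> Omega C"
  shows "rev_sph_image (truncation t) \<eta> \<subseteq> face t"
proof
  fix x assume "x \<in> rev_sph_image (truncation t) \<eta>"
  then obtain u where x: "x \<in> frontier (truncation t)" and "u \<in> \<eta>"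
    and normal: "\<And>y. y \<in> truncation t \<Longrightarrow> (y - x) \<bullet> u \<le> 0"
    by (auto simp: rev_sph_image_def outer_unit_normal_def)
  have "x \<in> truncation t"
    using x frontier_subset_closed[OF closed_truncation] by blast
  then have "x \<in> C" "x \<bullet> u\<^sub>0 \<le> - t"
    by (auto simp: truncation_def)
  have "u \<in> interior (polar_cone C)"
    using \<open>u \<in> \<eta>\<close> assms(2) by (auto simp: Omega_def)
  then obtain e where e: "0 < e" "\<And>x. x \<in> C \<Longrightarrow> x \<bullet> u \<le> - e * norm x"
    using interior_polar_cone_uniform by blast
  have "\<not> x \<bullet> u\<^sub>0 < - t"
  proof
    assume "x \<bullet> u\<^sub>0 < - t"
    define c where "c = t / (- (x \<bullet> u\<^sub>0))"
    have "0 < c" "c < 1"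
      using \<open>x \<bullet> u\<^sub>0 < - t\<close> assms(1) by (auto simp: c_def field_simps)
    have "(c *\<^sub>R x) \<bullet> u\<^sub>0 = - t"
      using \<open>x \<bullet> u\<^sub>0 < - t\<close> assms(1) by (simp add: c_def)
    then have "c *\<^sub>R x \<in> truncation t"
      using \<open>x \<in> C\<close> \<open>0 < c\<close> cone_C by (simp add: truncation_def cone_def)
    then have "(c - 1) * (x \<bullet> u) \<le> 0"
      using normal[of "c *\<^sub>R x"] by (simp add: algebra_simps)
    then have "0 \<le> x \<bullet> u"
      using \<open>c < 1\<close> by (simp add: mult_le_0_iff)
    moreover have "x \<noteq> 0"
      using \<open>x \<bullet> u\<^sub>0 < - t\<close> assms(1) by auto
    then have "0 < e * norm x"
      using \<open>0 < e\<close> by simp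
    then have "x \<bullet> u < 0"
      using e(2)[OF \<open>x \<in> C\<close>] by linarith
    ultimately show False
      by simp
  qed
  then show "x \<in> face t"
    using \<open>x \<in> C\<close> \<open>x \<bullet> u\<^sub>0 \<le> - t\<close> by (simp add: face_def)
qed

lemma rev_sph_image_truncation_subset_face_boundary:
  assumes "0 < t" "\<eta> \<subseteq> Omega C" "u\<^sub>0 \<notin> \<eta>"
  shows "rev_sph_image (truncation t) \<eta> \<subseteq> face_boundary t"
proof
  fix x assume x: "x \<in> rev_sph_image (truncation t) \<eta>"
  then have "x \<in> face t"
    using rev_sph_image_truncation_subset_face[OF assms(1,2)] by blast
  from x obtain u where "u \<in> \<eta>" "norm u = 1"
    and normal: "\<And>y. y \<in> truncation t \<Longrightarrow> (y - x) \<bullet> u \<le> 0"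
    by (auto simp: rev_sph_image_def outer_unit_normal_def)
  have "x \<notin> interior C"
  proof
    assume "x \<in> interior C"
    then obtain r where "0 < r" "ball x r \<subseteq> C"
      using mem_interior by blast
    have "d \<bullet> u \<le> 0" if "d \<bullet> u\<^sub>0 \<le> 0" "norm d < r" for d
    proof -
      have "x + d \<in> C"
        using \<open>ball x r \<subseteq> C\<close> that(2) by (auto simp: dist_norm)
      moreover have "(x + d) \<bullet> u\<^sub>0 \<le> - t"
        using \<open>x \<in> face t\<close> that(1) by (simp add: face_def inner_add_left)
      ultimately show ?thesis
        using normal[of "x + d"] by (simp add: truncation_def)
    qed
    then have "u = u\<^sub>0"
      using unit_vector_eq_if_halfspace_ball[OF \<open>0 < r\<close> \<open>norm u = 1\<close> norm_u\<^sub>0] by blast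
    then show False
      using \<open>u \<in> \<eta>\<close> assms(3) by simp
  qed
  then show "x \<in> face_boundary t"
    using \<open>x \<in> face t\<close> by (simp add: face_boundary_def)
qed

lemma rev_sph_image_truncation_eq_face:
  assumes "0 < t" "\<eta> \<subseteq> Omega C" "u\<^sub>0 \<in> \<eta>"
  shows "rev_sph_image (truncation t) \<eta> = face t"
proof
  show "rev_sph_image (truncation t) \<eta> \<subseteq> face t"
    by (rule rev_sph_image_truncation_subset_face[OF assms(1,2)])
  show "face t \<subseteq> rev_sph_image (truncation t) \<eta>"
  proof
    fix x assume "x \<in> face t"
    have "x \<notin> interior (truncation t)"
    proof
      assume "x \<in> interior (truncation t)"
      then obtain r where "0 < r" "ball x r \<subseteq> truncation t"
        using mem_interior by blast
      then have "x + (r / 2) *\<^sub>R u\<^sub>0 \<in> truncation t"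
        using norm_u\<^sub>0 by (auto simp: dist_norm)
      then show False
        using \<open>x \<in> face t\<close> \<open>0 < r\<close> inner_u\<^sub>0_u\<^sub>0
        by (simp add: truncation_def face_def inner_add_left)
    qed
    then have "x \<in> frontier (truncation t)"
      using \<open>x \<in> face t\<close> face_subset_truncation closure_subset by (auto simp: frontier_def)
    moreover have "outer_unit_normal (truncation t) x u\<^sub>0"
      using \<open>x \<in> face t\<close> norm_u\<^sub>0
      by (auto simp: outer_unit_normal_def truncation_def face_def inner_diff_left)
    ultimately show "x \<in> rev_sph_image (truncation t) \<eta>"
      using assms(3) by (auto simp: rev_sph_image_def)
  qed
qed

end

section \<open>The Gaussian cone-volume measure of a truncation\<close>

lemma homothets_of_boundary_point_distinct:
  fixes S :: "'a::euclidean_space set"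
  assumes "convex S" "p \<in> interior S" "x \<in> S - interior S" "y \<in> S - interior S" "0 < \<sigma>" "\<sigma> < \<tau>"
  shows "(1 - \<sigma>) *\<^sub>R p + \<sigma> *\<^sub>R x \<noteq> (1 - \<tau>) *\<^sub>R p + \<tau> *\<^sub>R y"
proof
  assume eq: "(1 - \<sigma>) *\<^sub>R p + \<sigma> *\<^sub>R x = (1 - \<tau>) *\<^sub>R p + \<tau> *\<^sub>R y"
  define l where "l = \<sigma> / \<tau>"
  have "0 < l" "l < 1"
    using assms(5,6) by (auto simp: l_def)
  have "\<tau> *\<^sub>R y = \<tau> *\<^sub>R ((1 - l) *\<^sub>R p + l *\<^sub>R x)"
    using eq assms(5,6) by (simp add: l_def algebra_simps)
  then have "y = (1 - l) *\<^sub>R p + l *\<^sub>R x"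
    using assms(5,6) by simp
  moreover have "p \<noteq> x"
    using assms(2,3) by auto
  ultimately have "y \<in> open_segment p x"
    using \<open>0 < l\<close> \<open>l < 1\<close> by (auto simp: in_segment)
  moreover have "open_segment p x \<subseteq> interior S"
    using assms(3) closure_subset by (intro in_interior_closure_convex_segment[OF assms(1,2)]) auto
  ultimately show False
    using assms(4) by blast
qed

lemma emeasure_measure_of_point_mass:
  assumes "x\<^sub>0 \<in> \<Omega>" "S \<subseteq> Pow \<Omega>" "X \<in> sigma_sets \<Omega> S"
    and f: "\<And>\<eta>. \<eta> \<subseteq> \<Omega> \<Longrightarrow> f \<eta> = (if x\<^sub>0 \<in> \<eta> then c else 0)"
  shows "emeasure (measure_of \<Omega> S f) X = (if x\<^sub>0 \<in> X then c else 0)"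
proof -
  have sets: "sets (measure_of \<Omega> S f) = sigma_sets \<Omega> S"
    using assms(2) by (rule sets_measure_of)
  have subset: "Y \<subseteq> \<Omega>" if "Y \<in> sigma_sets \<Omega> S" for Y
    using sigma_sets_into_sp[OF assms(2) that] .
  have "countably_additive (sigma_sets \<Omega> S) f"
    unfolding countably_additive_def
  proof (intro allI impI)
    fix B :: "nat \<Rightarrow> _"
    assume B: "range B \<subseteq> sigma_sets \<Omega> S" "disjoint_family B" "(\<Union>i. B i) \<in> sigma_sets \<Omega> S"
    have "B i \<in> sigma_sets \<Omega> S" for i
      using B(1) by blast
    then have "f (B i) = c * indicator (B i) x\<^sub>0" for i
      using f[OF subset, of "B i"] by (simp add: indicator_def)
    moreover have "(\<Sum>i. c * indicator (B i) x\<^sub>0) = c" if "x\<^sub>0 \<in> B i" for i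
      by (rule suminf_cmult_indicator[OF B(2) that])
    ultimately show "(\<Sum>i. f (B i)) = f (\<Union>i. B i)"
      using f[OF subset[OF B(3)]] by auto
  qed
  then have "emeasure (measure_of \<Omega> S f) X = f X"
    using assms(2,3) f sets
    by (intro emeasure_measure_of[OF refl]) (auto simp: positive_def sigma_sets.Empty)
  then show ?thesis
    using f[OF subset[OF assms(3)]] by simp
qed

definition gaussian :: "'a::euclidean_space \<Rightarrow> real" where
  "gaussian x = (2 * pi) powr (- real DIM('a) / 2) * exp (- (norm x)\<^sup>2 / 2)"

lemma gaussian_borel_measurable [measurable]: "gaussian \<in> borel_measurable borel"
  unfolding gaussian_def by measurable

lemma gauss_surface_area_eq_nn_integral:
  "gauss_surface_area K \<eta> =
    (\<integral>\<^sup>+x. ennreal (gaussian x) * indicator (rev_sph_image K \<eta>) x \<partial>hausdorff_measure (DIM('a) - 1))"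
  for K :: "'a::euclidean_space set"
  by (simp add: gauss_surface_area_def gaussian_def)

context cone_direction
begin

abbreviation \<H> :: "'a measure" where
  "\<H> \<equiv> hausdorff_measure (DIM('a) - 1)"

lemma face_in_sets: "face t \<in> sets \<H>"
  by (rule closed_in_sets_hausdorff_measure[OF closed_face])

lemma face_boundary_in_sets: "face_boundary t \<in> sets \<H>"
  by (rule closed_in_sets_hausdorff_measure[OF closed_face_boundary])

lemma emeasure_face_finite: "emeasure \<H> (face t) \<noteq> top"
proof -
  obtain R where "\<forall>x\<in>face t. norm x \<le> R"
    using bounded_face unfolding bounded_iff by blast
  then have "face t \<subseteq> {x. x \<bullet> u\<^sub>0 = - t} \<inter> cball 0 R"
    by (auto simp: face_def)
  then have le: "emeasure \<H> (face t) \<le> hausdorff_outer (DIM('a) - 1) ({x. x \<bullet> u\<^sub>0 = - t} \<inter> cball 0 R)"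
    unfolding emeasure_hausdorff_measure[OF face_in_sets] by (rule hausdorff_outer_mono)
  have "u\<^sub>0 \<noteq> 0"
    using norm_u\<^sub>0 by auto
  then show ?thesis
    by (rule neq_top_trans[OF hausdorff_outer_hyperplane_cball_finite le])
qed

lemma emeasure_face_boundary:
  assumes "0 < t"
  shows "emeasure \<H> (face_boundary t) = 0"
proof -
  obtain p where p: "p \<in> interior C" "p \<bullet> u\<^sub>0 = -1"
    by (rule interior_point_on_face)
  then have "p \<in> face 1"
    using interior_subset by (auto simp: face_def)
  have "emeasure \<H> (face_boundary 1) = 0"
  proof (rule hausdorff_measure_zero_if_disjoint_homothets[where p = p])
    fix \<sigma> :: real assume "1/2 \<le> \<sigma>" "\<sigma> < 1"
    show "(\<lambda>x. (1 - \<sigma>) *\<^sub>R p + \<sigma> *\<^sub>R x) ` face_boundary 1 \<subseteq> face 1"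
    proof (rule image_subsetI)
      fix x assume "x \<in> face_boundary 1"
      then have "x \<in> face 1"
        by (simp add: face_boundary_def)
      then show "(1 - \<sigma>) *\<^sub>R p + \<sigma> *\<^sub>R x \<in> face 1"
        using \<open>1/2 \<le> \<sigma>\<close> \<open>\<sigma> < 1\<close> by (intro convexD[OF convex_face \<open>p \<in> face 1\<close>]) auto
    qed
  next
    fix \<sigma> \<tau> :: real assume "1/2 \<le> \<sigma>" "\<sigma> < \<tau>"
    have boundary: "face_boundary 1 \<subseteq> C - interior C"
      by (auto simp: face_boundary_def face_def)
    show "(\<lambda>x. (1 - \<sigma>) *\<^sub>R p + \<sigma> *\<^sub>R x) ` face_boundary 1 \<inter>
        (\<lambda>x. (1 - \<tau>) *\<^sub>R p + \<tau> *\<^sub>R x) ` face_boundary 1 = {}"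
    proof (rule equals0I)
      fix y assume "y \<in> (\<lambda>x. (1 - \<sigma>) *\<^sub>R p + \<sigma> *\<^sub>R x) ` face_boundary 1 \<inter>
        (\<lambda>x. (1 - \<tau>) *\<^sub>R p + \<tau> *\<^sub>R x) ` face_boundary 1"
      then obtain x x' where "x \<in> face_boundary 1" "x' \<in> face_boundary 1"
        "(1 - \<sigma>) *\<^sub>R p + \<sigma> *\<^sub>R x = (1 - \<tau>) *\<^sub>R p + \<tau> *\<^sub>R x'"
        by auto
      moreover have "x \<in> C - interior C" "x' \<in> C - interior C" "0 < \<sigma>"
        using calculation(1,2) boundary \<open>1/2 \<le> \<sigma>\<close> by auto
      ultimately show False
        using homothets_of_boundary_point_distinct[OF convex_C p(1) _ _ _ \<open>\<sigma> < \<tau>\<close>] by blast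
    qed
  qed (rule face_boundary_in_sets face_in_sets emeasure_face_finite)+
  moreover have "face_boundary t = (\<lambda>x. 0 + t *\<^sub>R x) ` face_boundary 1"
    using face_boundary_scaleR[OF assms] by simp
  ultimately show ?thesis
    using emeasure_hausdorff_measure_affine_image[OF assms face_boundary_in_sets, of 0 1] by simp
qed

definition face_area :: "real \<Rightarrow> ennreal" where
  "face_area t = (\<integral>\<^sup>+x. ennreal (gaussian x) * indicator (face t) x \<partial>\<H>)"

lemma gauss_surface_area_truncation:
  assumes "0 < t" "\<eta> \<subseteq> Omega C"
  shows "gauss_surface_area (truncation t) \<eta> = (if u\<^sub>0 \<in> \<eta> then face_area t else 0)"
proof (cases "u\<^sub>0 \<in> \<eta>")
  case True
  then show ?thesis
    using rev_sph_image_truncation_eq_face[OF assms True]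
    by (simp add: gauss_surface_area_eq_nn_integral face_area_def)
next
  case False
  have "face_boundary t \<in> null_sets \<H>"
    using emeasure_face_boundary[OF assms(1)] face_boundary_in_sets by (rule null_setsI)
  then have "AE x in \<H>. ennreal (gaussian x) * indicator (rev_sph_image (truncation t) \<eta>) x = 0"
    by (rule AE_I') (use rev_sph_image_truncation_subset_face_boundary[OF assms False] in
      \<open>auto simp: indicator_def\<close>)
  then have "gauss_surface_area (truncation t) \<eta> = (\<integral>\<^sup>+x. 0 \<partial>\<H>)"
    unfolding gauss_surface_area_eq_nn_integral by (rule nn_integral_cong_AE)
  then show ?thesis
    using False by simp
qed

lemma emeasure_gauss_surface_measure_truncation:
  assumes "0 < t" "X \<in> sets (gauss_surface_measure C (truncation t))"
  shows "emeasure (gauss_surface_measure C (truncation t)) X = (if u\<^sub>0 \<in> X then face_area t else 0)"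
proof -
  have S: "{\<eta>. \<eta> \<in> sets borel \<and> \<eta> \<subseteq> Omega C} \<subseteq> Pow (Omega C)"
    by auto
  have "X \<in> sigma_sets (Omega C) {\<eta>. \<eta> \<in> sets borel \<and> \<eta> \<subseteq> Omega C}"
    using assms(2) by (simp add: gauss_surface_measure_def sets_measure_of[OF S])
  then show ?thesis
    unfolding gauss_surface_measure_def
    by (rule emeasure_measure_of_point_mass[OF u\<^sub>0_Omega S]) (rule gauss_surface_area_truncation[OF assms(1)])
qed

lemma gauss_cone_measure_truncation:
  assumes "0 < t" "\<eta> \<in> sets borel" "\<eta> \<subseteq> Omega C"
  shows "gauss_cone_measure C (truncation t) \<eta> = (if u\<^sub>0 \<in> \<eta> then ennreal t * face_area t else 0)"
proof -
  let ?M = "gauss_surface_measure C (truncation t)"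
  have S: "{\<eta>. \<eta> \<in> sets borel \<and> \<eta> \<subseteq> Omega C} \<subseteq> Pow (Omega C)"
    by auto
  have space: "space ?M = Omega C"
    unfolding gauss_surface_measure_def by (rule space_measure_of[OF S])
  have "Omega C \<in> sets borel"
    unfolding Omega_def by (intro sets.Int borel_closed borel_open) auto
  then have "Omega C - {u\<^sub>0} \<in> sets ?M"
    unfolding gauss_surface_measure_def sets_measure_of[OF S] by auto
  then have "Omega C - {u\<^sub>0} \<in> null_sets ?M"
    using emeasure_gauss_surface_measure_truncation[OF assms(1)] by auto
  then have ae: "AE u in ?M. u = u\<^sub>0"
    by (rule AE_I') (auto simp: space)
  have "gauss_cone_measure C (truncation t) \<eta> =
      (\<integral>\<^sup>+u. ennreal (neg_support_fun (truncation t) u\<^sub>0) * indicator \<eta> u\<^sub>0 \<partial>?M)"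
    unfolding gauss_cone_measure_def by (rule nn_integral_cong_AE) (use ae in \<open>auto elim: eventually_mono\<close>)
  also have "\<dots> = ennreal t * indicator \<eta> u\<^sub>0 * emeasure ?M (Omega C)"
    using support_fun_truncation_u\<^sub>0[OF assms(1)] by (simp add: neg_support_fun_def space)
  also have "emeasure ?M (Omega C) = face_area t"
    using emeasure_gauss_surface_measure_truncation[OF assms(1) sets.top] u\<^sub>0_Omega by (simp add: space)
  finally show ?thesis
    by (simp add: indicator_def)
qed

end

section \<open>Two truncations with equal Gaussian cone-volume measures\<close>

lemma continuous_vanishing_at_ends_eq_values:
  fixes g :: "real \<Rightarrow> real"
  assumes "continuous_on {0<..} g" "0 < g 1" "(g \<longlongrightarrow> 0) (at_right 0)" "(g \<longlongrightarrow> 0) at_top"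
  obtains a b where "0 < a" "a < b" "g a = g b"
proof -
  define c where "c = g 1 / 2"
  have "c < g 1"
    using assms(2) by (simp add: c_def)
  have "\<forall>\<^sub>F t in at_right 0. g t < c"
    using assms(2,3) by (intro order_tendstoD(2)) (auto simp: c_def)
  then obtain r where "0 < r" "\<And>t. 0 < t \<Longrightarrow> t < r \<Longrightarrow> g t < c"
    unfolding eventually_at_right[OF zero_less_one] by auto
  define t\<^sub>0 where "t\<^sub>0 = min (r / 2) (1 / 2)"
  have "0 < t\<^sub>0" "t\<^sub>0 < 1" "g t\<^sub>0 < c"
    using \<open>0 < r\<close> \<open>\<And>t. 0 < t \<Longrightarrow> t < r \<Longrightarrow> g t < c\<close>[of t\<^sub>0] by (auto simp: t\<^sub>0_def)
  have "\<forall>\<^sub>F t in at_top. g t < c"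
    using assms(2,4) by (intro order_tendstoD(2)) (auto simp: c_def)
  then obtain N where N: "\<And>t. N < t \<Longrightarrow> g t < c"
    unfolding eventually_at_top_dense by blast
  define t\<^sub>1 where "t\<^sub>1 = max N 1 + 1"
  have "1 < t\<^sub>1" "g t\<^sub>1 < c"
    using N[of t\<^sub>1] by (auto simp: t\<^sub>1_def)
  have continuous: "continuous_on {a..b} g" if "0 < a" for a b
    by (rule continuous_on_subset[OF assms(1)]) (use that in auto)
  obtain a where "t\<^sub>0 \<le> a" "a \<le> 1" "g a = c"
    using IVT'[of g t\<^sub>0 c 1] \<open>g t\<^sub>0 < c\<close> \<open>c < g 1\<close> \<open>t\<^sub>0 < 1\<close> continuous[OF \<open>0 < t\<^sub>0\<close>] by auto
  obtain b where "1 \<le> b" "b \<le> t\<^sub>1" "g b = c"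
    using IVT2'[of g t\<^sub>1 c 1] \<open>g t\<^sub>1 < c\<close> \<open>c < g 1\<close> \<open>1 < t\<^sub>1\<close> continuous[of 1] by auto
  have "a \<noteq> 1" "b \<noteq> 1"
    using \<open>g a = c\<close> \<open>g b = c\<close> \<open>c < g 1\<close> by auto
  then show ?thesis
    using that[of a b] \<open>t\<^sub>0 \<le> a\<close> \<open>0 < t\<^sub>0\<close> \<open>a \<le> 1\<close> \<open>1 \<le> b\<close> \<open>g a = c\<close> \<open>g b = c\<close> by auto
qed

context cone_direction
begin

definition face_integral :: "real \<Rightarrow> real" where
  "face_integral t = (\<integral>y. exp (- (t * norm y)\<^sup>2 / 2) * indicator (face 1) y \<partial>\<H>)"

lemma integrable_face_indicator: "integrable \<H> (indicator (face 1) :: 'a \<Rightarrow> real)"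
  using emeasure_face_finite face_in_sets by (intro integrable_real_indicator) (auto simp: top.not_eq_extremum)

lemma integrable_face_integrand: "integrable \<H> (\<lambda>y. exp (- (t * norm y)\<^sup>2 / 2) * indicator (face 1) y)"
proof (rule Bochner_Integration.integrable_bound[OF integrable_face_indicator])
  show "(\<lambda>y. exp (- (t * norm y)\<^sup>2 / 2) * indicator (face 1) y) \<in> borel_measurable \<H>"
    using closed_face by (intro borel_measurable_hausdorff_measure) measurable
qed (simp add: indicator_def)

lemma face_integral_nonneg: "0 \<le> face_integral t"
  unfolding face_integral_def by (rule integral_nonneg_AE) simp

lemma face_integral_le_exp:
  assumes "0 \<le> t"
  shows "face_integral t \<le> exp (- t\<^sup>2 / 2) * measure \<H> (face 1)"
proof -
  have "exp (- (t * norm y)\<^sup>2 / 2) * indicator (face 1) y \<le> exp (- t\<^sup>2 / 2) * indicator (face 1) y" for y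
  proof (cases "y \<in> face 1")
    case True
    then have "t \<le> t * norm y"
      using face_norm_ge[OF True] assms by (simp add: mult_le_cancel_left1)
    then have "t\<^sup>2 \<le> (t * norm y)\<^sup>2"
      using assms by (intro power_mono) auto
    then show ?thesis
      using True by simp
  qed simp
  then have "face_integral t \<le> (\<integral>y. exp (- t\<^sup>2 / 2) * indicator (face 1) y \<partial>\<H>)"
    unfolding face_integral_def
    using integrable_face_integrand integrable_face_indicator by (intro integral_mono) auto
  also have "\<dots> = exp (- t\<^sup>2 / 2) * measure \<H> (face 1)"
    by simp
  finally show ?thesis .
qed

lemma face_integral_pos:
  assumes "0 < measure \<H> (face 1)"
  shows "0 < face_integral 1"
proof -
  obtain R where R: "\<forall>y\<in>face 1. norm y \<le> R"
    using bounded_face unfolding bounded_iff by blast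
  have "exp (- R\<^sup>2 / 2) * indicator (face 1) y \<le> exp (- (1 * norm y)\<^sup>2 / 2) * indicator (face 1) y" for y
  proof (cases "y \<in> face 1")
    case True
    then have "(norm y)\<^sup>2 \<le> R\<^sup>2"
      using R by (intro power_mono) auto
    then show ?thesis
      using True by simp
  qed simp
  then have "(\<integral>y. exp (- R\<^sup>2 / 2) * indicator (face 1) y \<partial>\<H>) \<le> face_integral 1"
    unfolding face_integral_def
    using integrable_face_integrand[of 1] integrable_face_indicator by (intro integral_mono) auto
  moreover have "(\<integral>y. exp (- R\<^sup>2 / 2) * indicator (face 1) y \<partial>\<H>) = exp (- R\<^sup>2 / 2) * measure \<H> (face 1)"
    by simp
  moreover have "0 < exp (- R\<^sup>2 / 2) * measure \<H> (face 1)"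
    using assms by simp
  ultimately show ?thesis
    by linarith
qed

lemma continuous_face_integral: "continuous_on UNIV face_integral"
proof (intro continuous_at_imp_continuous_on ballI continuous_at_sequentiallyI)
  fix t and u :: "nat \<Rightarrow> real" assume "u \<longlonglongrightarrow> t"
  show "(\<lambda>n. face_integral (u n)) \<longlonglongrightarrow> face_integral t"
    unfolding face_integral_def
  proof (rule integral_dominated_convergence[where w = "indicator (face 1)"])
    show "(\<lambda>y. exp (- (t * norm y)\<^sup>2 / 2) * indicator (face 1) y) \<in> borel_measurable \<H>"
      "\<And>n. (\<lambda>y. exp (- (u n * norm y)\<^sup>2 / 2) * indicator (face 1) y) \<in> borel_measurable \<H>"
      using integrable_face_integrand by auto
    show "AE y in \<H>. (\<lambda>n. exp (- (u n * norm y)\<^sup>2 / 2) * indicator (face 1) y) \<longlonglongrightarrow>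
        exp (- (t * norm y)\<^sup>2 / 2) * indicator (face 1) y"
      using \<open>u \<longlonglongrightarrow> t\<close> by (intro AE_I2 tendsto_intros) auto
  qed (use integrable_face_indicator in \<open>auto simp: indicator_def\<close>)
qed

lemma face_area_eq:
  assumes "0 < t"
  shows "face_area t = ennreal ((2 * pi) powr (- real DIM('a) / 2) * (t ^ (DIM('a) - 1) * face_integral t))"
proof -
  have [measurable]: "face t \<in> sets borel"
    using closed_face by (rule borel_closed)
  have indicator: "indicator (face t) (t *\<^sub>R y) = (indicator (face 1) y :: ennreal)" for y
  proof -
    have "inj (\<lambda>x::'a. t *\<^sub>R x)"
      using assms by (simp add: inj_on_def)
    then have "t *\<^sub>R y \<in> face t \<longleftrightarrow> y \<in> face 1"
      unfolding face_scaleR[OF assms, symmetric] by (rule inj_image_mem_iff)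
    then show ?thesis
      by (simp add: indicator_def)
  qed
  have "face_area t = ennreal (t ^ (DIM('a) - 1)) *
      (\<integral>\<^sup>+y. ennreal (gaussian (t *\<^sub>R y)) * indicator (face 1) y \<partial>\<H>)"
    unfolding face_area_def indicator[symmetric]
    by (rule nn_integral_hausdorff_measure_scaleR[OF assms]) measurable
  also have "(\<integral>\<^sup>+y. ennreal (gaussian (t *\<^sub>R y)) * indicator (face 1) y \<partial>\<H>) =
      (\<integral>\<^sup>+y. ennreal ((2 * pi) powr (- real DIM('a) / 2) *
        (exp (- (t * norm y)\<^sup>2 / 2) * indicator (face 1) y)) \<partial>\<H>)"
    by (intro nn_integral_cong) (simp add: gaussian_def indicator_def power_mult_distrib)
  also have "\<dots> = ennreal (\<integral>y. (2 * pi) powr (- real DIM('a) / 2) *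
        (exp (- (t * norm y)\<^sup>2 / 2) * indicator (face 1) y) \<partial>\<H>)"
    by (rule nn_integral_eq_integral) (use integrable_face_integrand in auto)
  also have "\<dots> = ennreal ((2 * pi) powr (- real DIM('a) / 2) * face_integral t)"
    by (simp add: face_integral_def)
  finally show ?thesis
    using assms face_integral_nonneg by (simp add: ennreal_mult'[symmetric] mult_ac)
qed

lemma gauss_cone_measure_truncation_eq:
  assumes "0 < t" "\<eta> \<in> sets borel" "\<eta> \<subseteq> Omega C"
  shows "gauss_cone_measure C (truncation t) \<eta> =
    (if u\<^sub>0 \<in> \<eta> then ennreal ((2 * pi) powr (- real DIM('a) / 2) * (t ^ DIM('a) * face_integral t)) else 0)"
proof -
  have "t * t ^ (DIM('a) - 1) = t ^ DIM('a)"
    by (metis DIM_positive Suc_diff_1 power_Suc)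
  then have "t * ((2 * pi) powr (- real DIM('a) / 2) * (t ^ (DIM('a) - 1) * face_integral t)) =
      (2 * pi) powr (- real DIM('a) / 2) * (t ^ DIM('a) * face_integral t)"
    by (simp add: mult_ac)
  then show ?thesis
    using gauss_cone_measure_truncation[OF assms] face_area_eq[OF assms(1)] assms(1) face_integral_nonneg
    by (simp add: ennreal_mult'[symmetric])
qed

lemma face_moment_tendsto_at_right: "((\<lambda>t. t ^ DIM('a) * face_integral t) \<longlongrightarrow> 0) (at_right 0)"
proof (rule Lim_null_comparison)
  let ?\<mu> = "measure \<H> (face 1)"
  have "norm (t ^ DIM('a) * face_integral t) \<le> t ^ DIM('a) * ?\<mu>" if "0 < t" for t
  proof -
    have "exp (- t\<^sup>2 / 2) * ?\<mu> \<le> 1 * ?\<mu>"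
      by (intro mult_right_mono) auto
    then have "face_integral t \<le> ?\<mu>"
      using face_integral_le_exp[of t] that by linarith
    then show ?thesis
      using that face_integral_nonneg[of t] by (simp add: mult_left_mono)
  qed
  then show "\<forall>\<^sub>F t in at_right 0. norm (t ^ DIM('a) * face_integral t) \<le> t ^ DIM('a) * ?\<mu>"
    using eventually_at_right_less[of 0] by (rule eventually_mono[rotated])
  have "((\<lambda>t. t ^ DIM('a) * ?\<mu>) \<longlongrightarrow> 0 ^ DIM('a) * ?\<mu>) (at_right 0)"
    by (intro tendsto_intros)
  then show "((\<lambda>t. t ^ DIM('a) * ?\<mu>) \<longlongrightarrow> 0) (at_right 0)"
    by (simp add: zero_power[OF DIM_positive])
qed

lemma face_moment_tendsto_at_top: "((\<lambda>t. t ^ DIM('a) * face_integral t) \<longlongrightarrow> 0) at_top"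
proof (rule Lim_null_comparison)
  let ?\<mu> = "measure \<H> (face 1)"
  have "norm (t ^ DIM('a) * face_integral t) \<le> ?\<mu> * (t ^ DIM('a) / exp t)" if "2 \<le> t" for t
  proof -
    have "exp (- t\<^sup>2 / 2) \<le> exp (- t)"
      using that by (simp add: power2_eq_square field_simps mult_right_mono)
    then have "exp (- t\<^sup>2 / 2) * ?\<mu> \<le> exp (- t) * ?\<mu>"
      by (intro mult_right_mono) auto
    then have "face_integral t \<le> exp (- t) * ?\<mu>"
      using face_integral_le_exp[of t] that by linarith
    then show ?thesis
      using that face_integral_nonneg[of t] by (simp add: exp_minus field_simps mult_left_mono)
  qed
  then show "\<forall>\<^sub>F t in at_top. norm (t ^ DIM('a) * face_integral t) \<le> ?\<mu> * (t ^ DIM('a) / exp t)"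
    by (auto simp: eventually_at_top_linorder)
  show "((\<lambda>t. ?\<mu> * (t ^ DIM('a) / exp t)) \<longlongrightarrow> 0) at_top"
    using tendsto_mult_right_zero[OF tendsto_power_div_exp_0] .
qed

lemma face_moment_eq:
  obtains a b where "0 < a" "a < b" "a ^ DIM('a) * face_integral a = b ^ DIM('a) * face_integral b"
proof (cases "measure \<H> (face 1) = 0")
  case True
  then have "face_integral t = 0" if "0 \<le> t" for t
    using face_integral_le_exp[OF that] face_integral_nonneg[of t] by simp
  then show ?thesis
    using that[of 1 2] by simp
next
  case False
  then have "0 < measure \<H> (face 1)"
    by (simp add: less_le)
  have "continuous_on {0<..} (\<lambda>t. t ^ DIM('a) * face_integral t)"
    by (intro continuous_intros continuous_on_subset[OF continuous_face_integral]) auto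
  moreover have "0 < 1 ^ DIM('a) * face_integral 1"
    using face_integral_pos[OF \<open>0 < measure \<H> (face 1)\<close>] by simp
  ultimately show ?thesis
    using continuous_vanishing_at_ends_eq_values face_moment_tendsto_at_right face_moment_tendsto_at_top that
    by blast
qed

lemma truncations_same_gauss_cone_measure:
  obtains a b where "0 < a" "a < b"
    "\<And>\<eta>. \<eta> \<in> sets borel \<Longrightarrow> \<eta> \<subseteq> Omega C \<Longrightarrow>
      gauss_cone_measure C (truncation a) \<eta> = gauss_cone_measure C (truncation b) \<eta>"
proof -
  obtain a b where "0 < a" "a < b" and eq: "a ^ DIM('a) * face_integral a = b ^ DIM('a) * face_integral b"
    by (rule face_moment_eq)
  show ?thesis
  proof (rule that[OF \<open>0 < a\<close> \<open>a < b\<close>])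
    fix \<eta> assume "\<eta> \<in> sets borel" "\<eta> \<subseteq> Omega C"
    then show "gauss_cone_measure C (truncation a) \<eta> = gauss_cone_measure C (truncation b) \<eta>"
      using gauss_cone_measure_truncation_eq[of a \<eta>] gauss_cone_measure_truncation_eq[of b \<eta>]
        \<open>0 < a\<close> \<open>a < b\<close> eq by simp
  qed
qed

end

theorem theorem7p4:
  fixes C \<omega> :: "'a::euclidean_space set"
  assumes "closed C" and "convex C" and "cone C"
    and "pointed_cone C"
    and "interior C \<noteq> {}"
    and "\<omega> \<noteq> {}" and "compact \<omega>" and "\<omega> \<subseteq> Omega C"
  shows "\<exists>K L. K \<in> K_C_omega C \<omega> \<and> L \<in> K_C_omega C \<omega> \<and>
           (\<forall>\<eta>. \<eta> \<in> sets borel \<and> \<eta> \<subseteq> Omega C \<longrightarrow>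
                gauss_cone_measure C K \<eta> = gauss_cone_measure C L \<eta>) \<and>
           K \<noteq> L"
proof -
  obtain u\<^sub>0 where "u\<^sub>0 \<in> \<omega>"
    using assms(6) by blast
  interpret cone_direction C u\<^sub>0
    using assms(1,2,3,5,8) \<open>u\<^sub>0 \<in> \<omega>\<close> by unfold_locales auto
  obtain a b where "0 < a" "a < b"
    and same: "\<And>\<eta>. \<eta> \<in> sets borel \<Longrightarrow> \<eta> \<subseteq> Omega C \<Longrightarrow>
      gauss_cone_measure C (truncation a) \<eta> = gauss_cone_measure C (truncation b) \<eta>"
    using truncations_same_gauss_cone_measure by blast
  have "truncation a \<in> K_C_omega C \<omega>" "truncation b \<in> K_C_omega C \<omega>"
    using \<open>0 < a\<close> \<open>a < b\<close> \<open>u\<^sub>0 \<in> \<omega>\<close> assms(8) by (auto intro: truncation_in_K_C_omega)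
  moreover have "truncation a \<noteq> truncation b"
    by (rule truncation_neq[OF \<open>0 < a\<close> \<open>a < b\<close>])
  ultimately show ?thesis
    using same by blast
qed

end
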